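(* Let $E$ be a complex Banach lattice and let $A: E \supseteq D(A) \to E$ be a densely defined, closed, real linear operator. Let $u \in E_+$ and let $\varphi \in E'_+$ be strictly positive. Assume: (Domination) there are integers $m_1, m_2 \ge 0$ such that $D(A^{m_1}) \subseteq E_u$ and $D((A')^{m_2}) \subseteq (E')_\varphi$; (Spectral) there is $\lambda_0 \in \mathbb{R}$ which is a geometrically simple eigenvalue of $A$ and an eigenvalue of $A'$, such that $\ker(\lambda_0 - A)$ is spanned by a vector $v$ with $v \succeq u$, and $\ker(\lambda_0 - A')$ contains an element $\psi$ with $\psi \succeq \varphi$. Let $\mu_0, \mu$ be real numbers in $\rho(A)$. (a) If $R(\mu_0,A) \succeq -u\otimes\varphi$ and $\mu \le \mu_0$, then $R(\mu,A)\succeq -u\otimes\varphi$, and moreover $R(\mu,A)^n \succeq -u\otimes\varphi$ for all $n\in\mathbb{N}$. (b) If $R(\mu_0,A) \preceq u\otimes\varphi$ and $\mu \ge \mu_0$, then $R(\mu,A)\preceq u\otimes\varphi$, and moreover $(-1)^{n-1}R(\mu,A)^n \preceq u\otimes\varphi$ for all $n\in\mathbb{N}$.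
   Context: $E_{\mathbb{R}}$ denotes the real part of the complex Banach lattice $E$; $E'$ is the dual Banach lattice. A linear operator $A$ is real if $D(A) = (D(A)\cap E_{\mathbb{R}}) + i(D(A)\cap E_{\mathbb{R}})$ and $A$ maps $D(A)\cap E_{\mathbb{R}}$ into $E_{\mathbb{R}}$. $R(\mu,A) = (\mu - A)^{-1}$. For real vectors $u,v$, $v \succeq u$ means $v \ge cu$ for some $c>0$. For bounded real operators $T,S$, $T\succeq S$ (equivalently $S\preceq T$) means $T - cS$ is positive for some $c>0$. $u\otimes\varphi$ is the operator $f\mapsto\langle\varphi,f\rangle u$. $\varphi$ strictly positive: $\langle\varphi,f\rangle>0$ for all $0\ne f\in E_+$. $E_u = \{x : |x|\le cu \text{ for some } c\ge0\}$ and $(E')_\varphi = \{x'\in E' : |x'|\le c\varphi \text{ for some } c \ge 0\}$. Geometrically simple: one-dimensional eigenspace. *)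

theory Defs
  imports "HOL-Analysis.Analysis"
begin

text \<open>
A complex Banach lattice E is (by definition) the complexification of a real Banach
lattice E_R.  The complex Banach lattice
E is modelled as 'a \<times> 'a, the pair (x, y) standing for x + i y, with the product
topology (equivalent to the topology of any complexification norm).
\<close>

definition labs :: "'a::{ordered_real_vector,lattice} \<Rightarrow> 'a" where
  "labs x = sup x (- x)"

definition banach_lattice :: "'a::{banach,ordered_real_vector,lattice} itself \<Rightarrow> bool" where
  "banach_lattice _ \<longleftrightarrow> (\<forall>x y::'a. labs x \<le> labs y \<longrightarrow> norm x \<le> norm y)"

definition cscale :: "complex \<Rightarrow> 'a::real_vector \<times> 'a \<Rightarrow> 'a \<times> 'a" where
  "cscale c z = (Re c *\<^sub>R fst z - Im c *\<^sub>R snd z, Re c *\<^sub>R snd z + Im c *\<^sub>R fst z)"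

definition complex_subspace :: "('a::real_vector \<times> 'a) set \<Rightarrow> bool" where
  "complex_subspace D \<longleftrightarrow> 0 \<in> D \<and> (\<forall>x\<in>D. \<forall>y\<in>D. x + y \<in> D) \<and>
     (\<forall>c. \<forall>x\<in>D. cscale c x \<in> D)"

definition linear_op :: "('a::real_vector \<times> 'a) set \<Rightarrow> ('a \<times> 'a \<Rightarrow> 'a \<times> 'a) \<Rightarrow> bool" where
  "linear_op D A \<longleftrightarrow> complex_subspace D \<and> (\<forall>x\<in>D. \<forall>y\<in>D. A (x + y) = A x + A y) \<and>
     (\<forall>c. \<forall>x\<in>D. A (cscale c x) = cscale c (A x))"

definition closed_op :: "('a::real_normed_vector \<times> 'a) set \<Rightarrow> ('a \<times> 'a \<Rightarrow> 'a \<times> 'a) \<Rightarrow> bool" where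
  "closed_op D A \<longleftrightarrow> closed {(x, A x) | x. x \<in> D}"

definition densely_defined :: "('a::real_normed_vector \<times> 'a) set \<Rightarrow> bool" where
  "densely_defined D \<longleftrightarrow> closure D = UNIV"

text \<open>Real operator: D = (D \<inter> E_R) + i (D \<inter> E_R) and A maps D \<inter> E_R into E_R.\<close>
definition real_op :: "('a::real_vector \<times> 'a) set \<Rightarrow> ('a \<times> 'a \<Rightarrow> 'a \<times> 'a) \<Rightarrow> bool" where
  "real_op D A \<longleftrightarrow> D = {(x, y). (x, 0) \<in> D \<and> (y, 0) \<in> D} \<and>
     (\<forall>x. (x, 0) \<in> D \<longrightarrow> snd (A (x, 0)) = 0)"

fun pow_dom :: "'b set \<Rightarrow> 'b set \<Rightarrow> ('b \<Rightarrow> 'b) \<Rightarrow> nat \<Rightarrow> 'b set" where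
  "pow_dom X D A 0 = X"
| "pow_dom X D A (Suc m) = {x \<in> D. A x \<in> pow_dom X D A m}"

text \<open>Principal ideal E_u (componentwise, equivalent to |z| \<le> c u for the complex modulus).\<close>
definition ideal_gen :: "'a::{ordered_real_vector,lattice} \<Rightarrow> ('a \<times> 'a) set" where
  "ideal_gen u = {(x, y). \<exists>c\<ge>0. labs x \<le> c *\<^sub>R u \<and> labs y \<le> c *\<^sub>R u}"

definition cdual :: "('a::real_normed_vector \<times> 'a \<Rightarrow> complex) set" where
  "cdual = {f. (\<forall>x y. f (x + y) = f x + f y) \<and> (\<forall>c x. f (cscale c x) = c * f x)
              \<and> continuous_on UNIV f}"

definition dual_real :: "('a::real_vector \<times> 'a \<Rightarrow> complex) \<Rightarrow> bool" where
  "dual_real f \<longleftrightarrow> (\<forall>x. Im (f (x, 0)) = 0)"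

definition dual_pos :: "('a::ordered_real_vector \<times> 'a \<Rightarrow> complex) \<Rightarrow> bool" where
  "dual_pos f \<longleftrightarrow> dual_real f \<and> (\<forall>x\<ge>0. Re (f (x, 0)) \<ge> 0)"

definition strictly_positive :: "('a::ordered_real_vector \<times> 'a \<Rightarrow> complex) \<Rightarrow> bool" where
  "strictly_positive f \<longleftrightarrow> dual_real f \<and> (\<forall>x. 0 \<le> x \<and> x \<noteq> 0 \<longrightarrow> Re (f (x, 0)) > 0)"

text \<open>Principal ideal (E')_\<phi> in the dual lattice, written out:
  |x'| \<le> c \<phi> for some c (equivalently |x'(f)| \<le> c \<phi>(|f|) for all real f, up to the constant).\<close>
definition dual_ideal_gen :: "('a::{real_normed_vector,ordered_real_vector,lattice} \<times> 'a \<Rightarrow> complex)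
    \<Rightarrow> ('a \<times> 'a \<Rightarrow> complex) set" where
  "dual_ideal_gen \<phi> = {g \<in> cdual. \<exists>c\<ge>0. \<forall>x. cmod (g (x, 0)) \<le> c * Re (\<phi> (labs x, 0))}"

definition adj_dom :: "('a::real_normed_vector \<times> 'a) set \<Rightarrow> ('a \<times> 'a \<Rightarrow> 'a \<times> 'a)
    \<Rightarrow> ('a \<times> 'a \<Rightarrow> complex) set" where
  "adj_dom D A = {x' \<in> cdual. \<exists>y' \<in> cdual. \<forall>f\<in>D. x' (A f) = y' f}"

definition adj :: "('a::real_normed_vector \<times> 'a) set \<Rightarrow> ('a \<times> 'a \<Rightarrow> 'a \<times> 'a)
    \<Rightarrow> ('a \<times> 'a \<Rightarrow> complex) \<Rightarrow> ('a \<times> 'a \<Rightarrow> complex)" where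
  "adj D A x' = (THE y'. y' \<in> cdual \<and> (\<forall>f\<in>D. x' (A f) = y' f))"

definition resolvent :: "('a::real_vector \<times> 'a) set \<Rightarrow> ('a \<times> 'a \<Rightarrow> 'a \<times> 'a) \<Rightarrow> complex
    \<Rightarrow> 'a \<times> 'a \<Rightarrow> 'a \<times> 'a" where
  "resolvent D A \<mu> f = (THE g. g \<in> D \<and> cscale \<mu> g - A g = f)"

definition resolvent_set :: "('a::real_normed_vector \<times> 'a) set \<Rightarrow> ('a \<times> 'a \<Rightarrow> 'a \<times> 'a)
    \<Rightarrow> complex set" where
  "resolvent_set D A = {\<mu>. bij_betw (\<lambda>g. cscale \<mu> g - A g) D UNIV \<and>
                              continuous_on UNIV (resolvent D A \<mu>)}"

definition vec_succeq :: "'a::ordered_real_vector \<Rightarrow> 'a \<Rightarrow> bool" where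
  "vec_succeq v u \<longleftrightarrow> (\<exists>c>0. c *\<^sub>R u \<le> v)"

definition dual_succeq :: "('a::ordered_real_vector \<times> 'a \<Rightarrow> complex) \<Rightarrow> ('a \<times> 'a \<Rightarrow> complex) \<Rightarrow> bool" where
  "dual_succeq \<psi> \<phi> \<longleftrightarrow> (\<exists>c>0. dual_pos (\<lambda>f. \<psi> f - complex_of_real c * \<phi> f))"

definition pos_op :: "('a::ordered_real_vector \<times> 'a \<Rightarrow> 'a \<times> 'a) \<Rightarrow> bool" where
  "pos_op T \<longleftrightarrow> (\<forall>x\<ge>0. snd (T (x, 0)) = 0 \<and> fst (T (x, 0)) \<ge> 0)"

definition op_succeq :: "('a::ordered_real_vector \<times> 'a \<Rightarrow> 'a \<times> 'a) \<Rightarrow> ('a \<times> 'a \<Rightarrow> 'a \<times> 'a) \<Rightarrow> bool" where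
  "op_succeq T S \<longleftrightarrow> (\<exists>c>0. pos_op (\<lambda>f. T f - c *\<^sub>R S f))"

definition tensor :: "'a::real_vector \<Rightarrow> ('a \<times> 'a \<Rightarrow> complex) \<Rightarrow> 'a \<times> 'a \<Rightarrow> 'a \<times> 'a" where
  "tensor u \<phi> f = cscale (\<phi> f) (u, 0)"

definition eigenspace_op :: "'b set \<Rightarrow> ('b \<Rightarrow> 'b) \<Rightarrow> (complex \<Rightarrow> 'b \<Rightarrow> 'b) \<Rightarrow> complex \<Rightarrow> 'b set" where
  "eigenspace_op D A sc lam = {x \<in> D. sc lam x = A x}"

end

theory Submission
  imports Defs
begin

(*
  Write r and ph for the restrictions of R(mu,A) and phi to the real part. If r + c u (x) ph
  is positive, call it P. Testing P against the eigenvector v of A (u <= const v, v in E_u)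
  gives P u <= a u, and testing it against the eigenvector psi of A' (phi <= const psi,
  psi in E'_phi) gives ph o P <= b ph. Hence, by induction, r^n - P^n stays in the order
  interval spanned by a multiple of u (x) ph, and all powers r^n are bounded below by a
  multiple of - u (x) ph.

  To pass from mu0 to mu <= mu0, iterate the resolvent identity:
    R(mu) = sum (k < N) t^k R(mu0)^(k+1) + t^N R(mu0)^N R(mu),   t = mu0 - mu >= 0.
  The sum is controlled by the first step. For N = m1 + m2 the remainder
  R(mu0)^m1 R(mu) R(mu0)^m2 is dominated by u (x) phi: by the domination hypotheses and the
  uniform boundedness principle (Baire category plus Hahn-Banach), R(mu0)^m1 maps the unit ball
  into an order interval [-K u, K u], and norm (R(mu0)^m2 x) <= K phi(x) for x >= 0.
  Part (b) is the same argument for - R.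
*)

section \<open>A norming functional\<close>

text \<open>Graphs of real functionals dominated by the norm; by Zorn's lemma a maximal one is the graph
  of a functional defined everywhere.\<close>
definition norming_graph :: "'a::real_normed_vector \<Rightarrow> ('a \<times> real) set \<Rightarrow> bool" where
  "norming_graph w G \<longleftrightarrow> subspace G \<and> (w, norm w) \<in> G \<and> (\<forall>x a. (x, a) \<in> G \<longrightarrow> a \<le> norm x)"

lemma norming_graph_unique:
  assumes "norming_graph w G" "(x, a) \<in> G" "(x, b) \<in> G"
  shows "a = b"
proof -
  have "(0, a - b) \<in> G" "(0, b - a) \<in> G"
    using subspace_diff[of G "(x, a)" "(x, b)"] subspace_diff[of G "(x, b)" "(x, a)"] assms
    by (simp_all add: norming_graph_def)
  moreover have "a - b \<le> norm (0::'a)" "b - a \<le> norm (0::'a)"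
    using calculation assms(1) unfolding norming_graph_def by blast+
  ultimately show ?thesis by simp
qed

lemma dominated_subspace_shift:
  fixes z :: "'a::real_normed_vector"
  assumes G: "subspace G" and dom: "\<And>x a. (x, a) \<in> G \<Longrightarrow> a + c \<le> norm (x + z)"
    and xa: "(x, a) \<in> G" and t: "t > 0"
  shows "a + t * c \<le> norm (x + t *\<^sub>R z)"
proof -
  have "((1 / t) *\<^sub>R x, a / t) \<in> G"
    using subspace_scale[OF G xa, of "1 / t"] by simp
  then have "a / t + c \<le> norm ((1 / t) *\<^sub>R x + z)" by (rule dom)
  then have "t * (a / t + c) \<le> t * norm ((1 / t) *\<^sub>R x + z)"
    using t by (simp add: mult_left_mono)
  also have "t * norm ((1 / t) *\<^sub>R x + z) = norm (x + t *\<^sub>R z)"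
    using t by (simp add: scaleR_add_right flip: norm_scaleR[of t, simplified abs_of_pos[OF t]])
  finally show ?thesis using t by (simp add: algebra_simps)
qed

lemma dominated_subspace_extension_constant:
  fixes z :: "'a::real_normed_vector"
  assumes sub: "subspace G" and dom: "\<And>x a. (x, a) \<in> G \<Longrightarrow> a \<le> norm x"
  obtains c where "\<And>x a. (x, a) \<in> G \<Longrightarrow> a - c \<le> norm (x - z)"
    and "\<And>x a. (x, a) \<in> G \<Longrightarrow> a + c \<le> norm (x + z)"
proof -
  define S where "S = {b - norm (y - z) | y b. (y, b) \<in> G}"
  have sep: "b - norm (y - z) \<le> norm (y' + z) - b'" if "(y, b) \<in> G" "(y', b') \<in> G" for y b y' b'
  proof -
    have "b + b' \<le> norm (y + y')"
      using dom subspace_add[OF sub that] by simp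
    also have "\<dots> \<le> norm (y - z) + norm (y' + z)"
      using norm_triangle_ineq[of "y - z" "y' + z"] by simp
    finally show ?thesis by simp
  qed
  have S: "S \<noteq> {}" "bdd_above S"
    using subspace_0[OF sub] sep unfolding S_def bdd_above_def zero_prod_def by fastforce+
  have "a - norm (x - z) \<le> Sup S" if "(x, a) \<in> G" for x a
    using that by (intro cSup_upper S(2)) (auto simp: S_def)
  moreover have "Sup S \<le> norm (x + z) - a" if "(x, a) \<in> G" for x a
    using that sep by (intro cSup_least S(1)) (auto simp: S_def)
  ultimately show ?thesis
    by (intro that[of "Sup S"]) (simp_all add: algebra_simps)
qed

lemma norming_graph_extend:
  fixes w :: "'a::real_normed_vector"
  assumes G: "norming_graph w G"
  shows "\<exists>c. norming_graph w (span (insert (z, c) G))"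
proof -
  have sub: "subspace G" and dom: "\<And>x a. (x, a) \<in> G \<Longrightarrow> a \<le> norm x"
    using G by (auto simp: norming_graph_def)
  obtain c where lower: "\<And>x a. (x, a) \<in> G \<Longrightarrow> a - c \<le> norm (x - z)"
    and upper: "\<And>x a. (x, a) \<in> G \<Longrightarrow> a + c \<le> norm (x + z)"
    using dominated_subspace_extension_constant[OF sub dom] by blast
  have shift: "a + t * c \<le> norm (x + t *\<^sub>R z)" if "(x, a) \<in> G" for x a t
  proof (cases t "0 :: real" rule: linorder_cases)
    case less
    have "a + (- t) * (- c) \<le> norm (x + (- t) *\<^sub>R (- z))"
      by (rule dominated_subspace_shift[OF sub _ that]) (use lower less in auto)
    then show ?thesis by simp
  next
    case equal then show ?thesis using dom that by simp
  next
    case greater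
    show ?thesis by (rule dominated_subspace_shift[OF sub upper that greater])
  qed
  have "a \<le> norm x" if xa: "(x, a) \<in> span (insert (z, c) G)" for x a
  proof -
    obtain t where "(x - t *\<^sub>R z, a - t * c) \<in> G"
      using xa unfolding span_insert span_eq_iff[THEN iffD2, OF sub] by auto
    from shift[OF this, of t] show ?thesis by simp
  qed
  moreover have "(w, norm w) \<in> span (insert (z, c) G)"
    using G by (simp add: norming_graph_def span_base)
  ultimately show ?thesis unfolding norming_graph_def by blast
qed

lemma subspace_Union_chain:
  assumes "C \<noteq> {}" and chain: "subset.chain {S. subspace S} C"
  shows "subspace (\<Union>C)"
proof -
  have sub: "subspace S" if "S \<in> C" for S
    using chain that unfolding subset.chain_def by blast
  have "x + y \<in> \<Union>C" if xy: "x \<in> \<Union>C" "y \<in> \<Union>C" for x y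
  proof -
    obtain S T where ST: "S \<in> C" "T \<in> C" "x \<in> S" "y \<in> T" using xy by blast
    with chain have "S \<subseteq> T \<or> T \<subseteq> S" unfolding subset.chain_def by blast
    with ST sub show ?thesis by (metis UnionI subsetD subspace_add)
  qed
  moreover have "c *\<^sub>R x \<in> \<Union>C" if "x \<in> \<Union>C" for c x
    using that sub subspace_scale by blast
  moreover have "0 \<in> \<Union>C"
    using assms(1) sub subspace_0 by blast
  ultimately show ?thesis unfolding subspace_def by blast
qed

lemma total_norming_graph_exists:
  fixes w :: "'a::real_normed_vector"
  shows "\<exists>M. norming_graph w M \<and> (\<forall>x. \<exists>a. (x, a) \<in> M)"
proof -
  have "a \<le> norm x" if "(x, a) \<in> span {(w, norm w)}" for x a
    using that by (auto simp: span_singleton abs_mult mult_right_mono)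
  then have "span {(w, norm w)} \<in> {G. norming_graph w G}"
    by (simp add: norming_graph_def span_base)
  moreover have "\<Union>C \<in> {G. norming_graph w G}"
    if C: "C \<noteq> {}" "subset.chain {G. norming_graph w G} C" for C
  proof -
    have graphs: "norming_graph w G" if "G \<in> C" for G
      using C(2) that unfolding subset.chain_def by blast
    have "subset.chain {S. subspace S} C"
      using C(2) unfolding subset.chain_def norming_graph_def by blast
    then have "subspace (\<Union>C)" by (rule subspace_Union_chain[OF C(1)])
    moreover have "(w, norm w) \<in> \<Union>C"
      using C(1) graphs unfolding norming_graph_def by blast
    moreover have "a \<le> norm x" if "(x, a) \<in> \<Union>C" for x a
      using that graphs unfolding norming_graph_def by blast
    ultimately show ?thesis by (simp add: norming_graph_def)
  qed
  ultimately obtain M where M: "norming_graph w M"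
    and max: "\<And>G. norming_graph w G \<Longrightarrow> M \<subseteq> G \<Longrightarrow> G = M"
    using subset_Zorn_nonempty[of "{G. norming_graph w G}"] by blast
  have "\<exists>a. (x, a) \<in> M" for x
  proof -
    obtain c where "norming_graph w (span (insert (x, c) M))"
      using norming_graph_extend[OF M] by blast
    moreover have "M \<subseteq> span (insert (x, c) M)"
      by (simp add: span_base subset_iff)
    ultimately have "span (insert (x, c) M) = M" by (rule max)
    then show ?thesis using span_base[of "(x, c)" "insert (x, c) M"] by auto
  qed
  with M show ?thesis by blast
qed

lemma norming_functional:
  fixes w :: "'a::real_normed_vector"
  obtains l :: "'a \<Rightarrow>\<^sub>L real" where "norm l \<le> 1" "blinfun_apply l w = norm w"
proof -
  obtain M where M: "norming_graph w M" and total: "\<forall>x. \<exists>a. (x, a) \<in> M"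
    using total_norming_graph_exists[of w] by blast
  define l where "l x = (THE a. (x, a) \<in> M)" for x
  have "\<exists>!a. (x, a) \<in> M" for x
    using total norming_graph_unique[OF M] by blast
  then have "(x, l x) \<in> M" for x
    unfolding l_def by (rule theI')
  then have graph: "(x, a) \<in> M \<longleftrightarrow> a = l x" for x a
    using norming_graph_unique[OF M] by blast
  have sub: "subspace M" and lw: "l w = norm w" and dom: "l x \<le> norm x" for x
    using M unfolding norming_graph_def graph by auto
  have add: "l (x + y) = l x + l y" and scale: "l (r *\<^sub>R x) = r * l x" for x y r
    using subspace_add[OF sub, of "(x, l x)" "(y, l y)"] subspace_scale[OF sub, of "(x, l x)" r]
    by (simp_all add: graph)
  have bound: "\<bar>l x\<bar> \<le> norm x" for x
    using dom[of x] dom[of "- x"] scale[of "- 1" x] by simp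
  have "bounded_linear l"
    by (rule bounded_linear_intro[where K = 1]) (use add scale bound in auto)
  then show ?thesis
    using that[of "Blinfun l"] bound lw
    by (simp add: bounded_linear_Blinfun_apply norm_blinfun_bound)
qed

section \<open>Order intervals and uniform boundedness\<close>

lemma labs_nonneg: "0 \<le> labs (x::'a::{ordered_real_vector,lattice})"
proof -
  have "0 \<le> labs x + labs x"
    using add_mono[of x "labs x" "- x" "labs x"] by (simp add: labs_def)
  then show ?thesis
    using scaleR_nonneg_nonneg[of "1 / 2 :: real" "labs x + labs x"] by simp
qed

lemma labs_of_nonneg: "0 \<le> (x::'a::{ordered_real_vector,lattice}) \<Longrightarrow> labs x = x"
  unfolding labs_def by (rule sup_absorb1) (meson neg_le_0_iff_le order_trans)

lemma labs_uminus [simp]: "labs (- (x::'a::{ordered_real_vector,lattice})) = labs x"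
  unfolding labs_def by (simp add: sup_commute)

lemma labs_le_iff: "labs (x::'a::{ordered_real_vector,lattice}) \<le> y \<longleftrightarrow> x \<le> y \<and> - x \<le> y"
  unfolding labs_def by simp

lemma labs_triangle: "labs (x + y) \<le> labs x + labs (y::'a::{ordered_real_vector,lattice})"
  unfolding labs_le_iff minus_add_distrib
  by (intro conjI add_mono) (simp_all add: labs_def)

lemma labs_scaleR_of_nonneg:
  assumes "0 \<le> (u::'a::{ordered_real_vector,lattice})"
  shows "labs (s *\<^sub>R u) = \<bar>s\<bar> *\<^sub>R u"
proof (cases "0 \<le> s")
  case True then show ?thesis using assms by (simp add: labs_of_nonneg scaleR_nonneg_nonneg)
next
  case False
  then have "labs (- (s *\<^sub>R u)) = - (s *\<^sub>R u)"
    using assms by (intro labs_of_nonneg) (simp add: scaleR_nonpos_nonneg)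
  with False show ?thesis by simp
qed

lemma labs_neg_one_power_scaleR [simp]:
  "labs (((- 1 :: real) ^ n) *\<^sub>R (x::'a::{ordered_real_vector,lattice})) = labs x"
  by (cases "even n") simp_all

lemma labs_inf_zero_le:
  assumes "0 \<le> y"
  shows "labs (inf x 0) \<le> labs (x - (y::'a::{ordered_real_vector,lattice}))"
proof -
  have "y - x \<le> labs (x - y)"
    by (simp add: labs_def)
  then have "- labs (x - y) \<le> x - y"
    by (simp add: minus_le_iff)
  also have "x - y \<le> x" using assms by simp
  finally have "- labs (x - y) \<le> inf x 0"
    using labs_nonneg[of "x - y"] by simp
  then have "- inf x 0 \<le> labs (x - y)"
    using minus_le_iff by blast
  moreover have "inf x 0 \<le> labs (x - y)"
    using labs_nonneg[of "x - y"] le_infI2 by blast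
  ultimately show ?thesis by (simp add: labs_le_iff)
qed

lemma closed_nonneg_cone:
  assumes "banach_lattice TYPE('a::{banach,ordered_real_vector,lattice})"
  shows "closed {x::'a. 0 \<le> x}"
proof -
  have "0 \<le> x" if "x \<in> closure {x. 0 \<le> x}" for x :: 'a
  proof -
    have "norm (inf x 0) < e" if "e > 0" for e
    proof -
      obtain y where "0 \<le> y" "dist y x < e"
        using \<open>x \<in> closure _\<close> \<open>e > 0\<close> unfolding closure_approachable by blast
      then show ?thesis
        using assms labs_inf_zero_le[of y x] unfolding banach_lattice_def
        by (metis dist_commute dist_norm order_le_less_trans)
    qed
    then have "inf x 0 = 0"
      by (metis norm_le_zero_iff order_less_irrefl not_le)
    then show ?thesis by (simp add: inf.absorb_iff2 inf_commute)
  qed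
  then show ?thesis by (metis closure_subset_eq mem_Collect_eq subsetI)
qed

lemma closed_Collect_le_banach_lattice:
  fixes f g :: "'b::topological_space \<Rightarrow> 'a::{banach,ordered_real_vector,lattice}"
  assumes "banach_lattice TYPE('a)" "continuous_on UNIV f" "continuous_on UNIV g"
  shows "closed {x. f x \<le> g x}"
proof -
  have "continuous_on UNIV (\<lambda>x. g x - f x)"
    using assms by (intro continuous_intros)
  then have "closed ((\<lambda>x. g x - f x) -` {y. 0 \<le> y} \<inter> UNIV)"
    using closed_nonneg_cone[OF assms(1)] continuous_on_closed_vimage[OF closed_UNIV] by blast
  then show ?thesis by (simp add: vimage_def)
qed

lemma Baire_closed_cover:
  fixes S :: "nat \<Rightarrow> 'a::complete_space set"
  assumes "\<And>n. closed (S n)" and "\<And>x. \<exists>n. x \<in> S n"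
  obtains n x e where "e > 0" "ball x e \<subseteq> S n"
proof -
  obtain n where "euclidean interior_of S n \<noteq> {}"
  proof (rule ccontr)
    assume no_interior: "\<not> thesis"
    have "closedin euclidean T \<and> euclidean interior_of T = {}" if T: "T \<in> range S" for T
    proof -
      obtain n where "T = S n" using T by blast
      with assms(1) no_interior \<open>\<And>n. euclidean interior_of S n \<noteq> {} \<Longrightarrow> thesis\<close>
      show ?thesis by (metis closed_closedin)
    qed
    then have "euclidean interior_of \<Union>(range S) = {}"
      by (intro Baire_category_alt completely_metrizable_space_euclidean[THEN disjI1]) auto
    moreover have "\<Union>(range S) = UNIV" using assms(2) by blast
    ultimately show False by (simp add: interior_of_eq)
  qed
  then obtain x where "x \<in> interior (S n)"
    by (auto simp: interior_of_def interior_def)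
  then obtain e where "e > 0" "ball x e \<subseteq> S n"
    by (meson open_contains_ball_eq open_interior interior_subset subset_trans)
  then show ?thesis by (rule that)
qed

lemma convex_symmetric_ball_subset:
  fixes C :: "'a::real_normed_vector set"
  assumes convex: "convex C" and symmetric: "\<And>x. x \<in> C \<Longrightarrow> - x \<in> C" and ball: "ball x r \<subseteq> C"
  shows "ball 0 r \<subseteq> C"
proof
  fix y :: 'a assume "y \<in> ball 0 r"
  then have "x + y \<in> C" "x - y \<in> C"
    using ball by (auto simp: dist_norm)
  then have "x + y \<in> C" "- (x - y) \<in> C"
    using symmetric by blast+
  from convexD[OF convex this, of "1 / 2" "1 / 2"] show "y \<in> C"
    by (simp flip: scaleR_add_right)
qed

lemma barrel_contains_ball:
  fixes C :: "'a::banach set"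
  assumes closed: "closed C" and convex: "convex C" and symmetric: "\<And>x. x \<in> C \<Longrightarrow> - x \<in> C"
    and absorbing: "\<And>x. \<exists>c>0. c *\<^sub>R x \<in> C"
  obtains \<delta> where "\<delta> > 0" "ball 0 \<delta> \<subseteq> C"
proof -
  have zero: "0 \<in> C"
    using absorbing[of 0] by auto
  define S where "S n = (\<lambda>x. (1 / real (Suc n)) *\<^sub>R x) -` C" for n
  have "closed (S n)" for n
    unfolding S_def by (intro continuous_closed_vimage closed) (intro continuous_intros)
  moreover have "\<exists>n. x \<in> S n" for x
  proof -
    obtain c where c: "c > 0" "c *\<^sub>R x \<in> C" using absorbing by blast
    obtain n where n: "1 / real (Suc n) < c"
      using reals_Archimedean[OF c(1)] by (auto simp: inverse_eq_divide)
    have "(1 / real (Suc n) / c) *\<^sub>R (c *\<^sub>R x) + (1 - 1 / real (Suc n) / c) *\<^sub>R 0 \<in> C"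
      using n c by (intro convexD[OF convex c(2) zero]) (simp_all add: field_simps)
    then show ?thesis using c(1) by (auto simp: S_def)
  qed
  ultimately obtain n x0 e where e: "e > 0" "ball x0 e \<subseteq> S n"
    by (rule Baire_closed_cover)
  define k where "k = real (Suc n)"
  have k: "k > 0" by (simp add: k_def)
  have "ball ((1 / k) *\<^sub>R x0) (e / k) \<subseteq> C"
  proof
    fix y assume "y \<in> ball ((1 / k) *\<^sub>R x0) (e / k)"
    then have "k *\<^sub>R y \<in> ball x0 e"
      using k by (simp add: dist_norm field_simps norm_minus_commute
          flip: norm_scaleR[of k, simplified abs_of_pos[OF k]])
    then show "y \<in> C"
      using e(2) k unfolding S_def k_def by auto
  qed
  from convex_symmetric_ball_subset[OF convex symmetric this]
  have "ball 0 (e / k) \<subseteq> C" .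
  then show ?thesis using that[of "e / k"] e k by simp
qed
lemma convex_order_interval_preimage:
  fixes F :: "'b::real_vector \<Rightarrow> 'a::ordered_real_vector"
  assumes F: "linear F"
  shows "convex {x. F x \<le> u \<and> - F x \<le> u}"
proof (rule convexI)
  fix x y and a b :: real
  assume "x \<in> {x. F x \<le> u \<and> - F x \<le> u}" "y \<in> {x. F x \<le> u \<and> - F x \<le> u}"
    "0 \<le> a" "0 \<le> b" "a + b = 1"
  then have "a *\<^sub>R F x + b *\<^sub>R F y \<le> a *\<^sub>R u + b *\<^sub>R u"
    and "a *\<^sub>R (- F x) + b *\<^sub>R (- F y) \<le> a *\<^sub>R u + b *\<^sub>R u"
    by (intro add_mono scaleR_left_mono; simp)+
  with \<open>a + b = 1\<close> show "a *\<^sub>R x + b *\<^sub>R y \<in> {x. F x \<le> u \<and> - F x \<le> u}"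
    by (simp add: linear_add[OF F] linear_scale[OF F] flip: scaleR_add_left)
qed

lemma convex_weakly_dominated:
  fixes G :: "'a \<Rightarrow> 'b::real_normed_vector"
  shows "convex {l::'b \<Rightarrow>\<^sub>L real. \<forall>x\<in>X. \<bar>blinfun_apply l (G x)\<bar> \<le> ph x}"
proof (rule convexI)
  fix l l' and a b :: real
  assume l: "l \<in> {l. \<forall>x\<in>X. \<bar>blinfun_apply l (G x)\<bar> \<le> ph x}"
    and l': "l' \<in> {l. \<forall>x\<in>X. \<bar>blinfun_apply l (G x)\<bar> \<le> ph x}"
    and ab: "0 \<le> a" "0 \<le> b" "a + b = 1"
  have "\<bar>a * blinfun_apply l (G x) + b * blinfun_apply l' (G x)\<bar> \<le> ph x" if "x \<in> X" for x
  proof -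
    have "a * ph x + b * ph x = ph x"
      using ab(3) by (metis distrib_right mult_1)
    with that l l' ab(1,2) show ?thesis
      using abs_triangle_ineq[of "a * l (G x)" "b * l' (G x)"]
        mult_left_mono[of "\<bar>l (G x)\<bar>" "ph x" a] mult_left_mono[of "\<bar>l' (G x)\<bar>" "ph x" b]
      by (simp add: abs_mult)
  qed
  then show "a *\<^sub>R l + b *\<^sub>R l' \<in> {l. \<forall>x\<in>X. \<bar>blinfun_apply l (G x)\<bar> \<le> ph x}"
    by (simp add: blinfun.add_left blinfun.scaleR_left)
qed

lemma order_bounded_of_ideal_valued:
  fixes F :: "'b::banach \<Rightarrow> 'a::{banach,ordered_real_vector,lattice}"
  assumes BL: "banach_lattice TYPE('a)" and F: "linear F" "continuous_on UNIV F"
    and u: "0 \<le> u" and ideal: "\<And>x. \<exists>c. labs (F x) \<le> c *\<^sub>R u"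
  obtains K where "0 \<le> K" "\<And>y. labs (F y) \<le> (K * norm y) *\<^sub>R u"
proof -
  define C where "C = {x. F x \<le> u \<and> - F x \<le> u}"
  have "closed C"
    unfolding C_def Collect_conj_eq
    using F(2)
    by (intro closed_Int closed_Collect_le_banach_lattice[OF BL]) (auto intro: continuous_intros)
  moreover have "convex C"
    unfolding C_def by (rule convex_order_interval_preimage[OF F(1)])
  moreover have "- x \<in> C" if "x \<in> C" for x
    using that linear_neg[OF F(1)] unfolding C_def by simp
  moreover have "\<exists>t>0. t *\<^sub>R x \<in> C" for x
  proof -
    obtain c where c: "F x \<le> c *\<^sub>R u" "- F x \<le> c *\<^sub>R u"
      using ideal[of x] by (auto simp: labs_le_iff)
    define t where "t = 1 / max c 1"
    have t: "t > 0" "t * c \<le> 1" by (auto simp: t_def field_simps)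
    have "t *\<^sub>R c *\<^sub>R u \<le> u"
      using scaleR_right_mono[OF t(2) u] by simp
    moreover have "t *\<^sub>R F x \<le> t *\<^sub>R c *\<^sub>R u" "t *\<^sub>R (- F x) \<le> t *\<^sub>R c *\<^sub>R u"
      using c t(1) by (intro scaleR_left_mono; simp)+
    ultimately show ?thesis
      using t(1) by (intro exI[of _ t]) (auto simp: C_def linear_scale[OF F(1)])
  qed
  ultimately obtain \<delta> where \<delta>: "\<delta> > 0" "ball 0 \<delta> \<subseteq> C"
    by (rule barrel_contains_ball)
  have "labs (F y) \<le> ((2 / \<delta>) * norm y) *\<^sub>R u" for y
  proof (cases "y = 0")
    case True then show ?thesis by (simp add: linear_0[OF F(1)] labs_def)
  next
    case False
    define s where "s = \<delta> / (2 * norm y)"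
    have s: "s > 0" "1 / s = (2 / \<delta>) * norm y"
      using False \<delta>(1) by (auto simp: s_def)
    have "s *\<^sub>R y \<in> C"
      using \<delta> False by (intro subsetD[OF \<delta>(2)]) (simp add: s_def dist_norm)
    then have "s *\<^sub>R F y \<le> u" "- (s *\<^sub>R F y) \<le> u"
      unfolding C_def by (simp_all add: linear_scale[OF F(1)])
    then have "(1 / s) *\<^sub>R s *\<^sub>R F y \<le> (1 / s) *\<^sub>R u" "(1 / s) *\<^sub>R (- (s *\<^sub>R F y)) \<le> (1 / s) *\<^sub>R u"
      using s(1) by (intro scaleR_left_mono; simp)+
    then have "F y \<le> (1 / s) *\<^sub>R u" "- F y \<le> (1 / s) *\<^sub>R u"
      using s(1) by simp_all
    then show ?thesis
      unfolding s(2) labs_le_iff by blast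
  qed
  with \<delta>(1) show ?thesis by (intro that[of "2 / \<delta>"]) simp_all
qed

lemma norm_bounded_of_weakly_bounded:
  fixes G :: "'a \<Rightarrow> 'b::real_normed_vector" and ph :: "'a \<Rightarrow> real"
  assumes ph: "\<And>x. x \<in> X \<Longrightarrow> 0 \<le> ph x"
    and weak: "\<And>l::'b \<Rightarrow>\<^sub>L real. \<exists>c. \<forall>x\<in>X. \<bar>blinfun_apply l (G x)\<bar> \<le> c * ph x"
  obtains K where "0 \<le> K" "\<And>x. x \<in> X \<Longrightarrow> norm (G x) \<le> K * ph x"
proof -
  define C where "C = {l::'b \<Rightarrow>\<^sub>L real. \<forall>x\<in>X. \<bar>blinfun_apply l (G x)\<bar> \<le> ph x}"
  have "closed C"
    unfolding C_def Collect_ball_eq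
    by (intro closed_INT ballI closed_Collect_le continuous_intros)
  moreover have "convex C"
    unfolding C_def by (rule convex_weakly_dominated)
  moreover have "- l \<in> C" if "l \<in> C" for l
    using that unfolding C_def by (simp add: blinfun.minus_left)
  moreover have "\<exists>t>0. t *\<^sub>R l \<in> C" for l
  proof -
    obtain c where c: "\<forall>x\<in>X. \<bar>blinfun_apply l (G x)\<bar> \<le> c * ph x"
      using weak by blast
    define t where "t = 1 / max c 1"
    have t: "t > 0" "t * max c 1 = 1" by (auto simp: t_def)
    have "t * \<bar>blinfun_apply l (G x)\<bar> \<le> ph x" if "x \<in> X" for x
    proof -
      have "\<bar>blinfun_apply l (G x)\<bar> \<le> max c 1 * ph x"
        using c that ph[OF that] by (meson max.cobounded1 mult_right_mono order_trans)
      then have "t * \<bar>blinfun_apply l (G x)\<bar> \<le> t * max c 1 * ph x"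
        using t(1) by (simp add: mult_left_mono mult.assoc)
      then show ?thesis using t(2) by simp
    qed
    then show ?thesis
      using t(1) by (intro exI[of _ t]) (simp add: C_def blinfun.scaleR_left abs_mult)
  qed
  ultimately obtain \<delta> where \<delta>: "\<delta> > 0" "ball 0 \<delta> \<subseteq> C"
    by (rule barrel_contains_ball)
  have "norm (G x) \<le> (2 / \<delta>) * ph x" if x: "x \<in> X" for x
  proof -
    obtain l :: "'b \<Rightarrow>\<^sub>L real" where l: "norm l \<le> 1" "blinfun_apply l (G x) = norm (G x)"
      by (rule norming_functional)
    have "(\<delta> / 2) *\<^sub>R l \<in> C"
      using \<delta> l(1) by (intro subsetD[OF \<delta>(2)]) simp
    then have "\<delta> / 2 * norm (G x) \<le> ph x"
      using x l(2) \<delta>(1) unfolding C_def by (auto simp: blinfun.scaleR_left)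
    then show ?thesis using \<delta>(1) by (simp add: field_simps)
  qed
  with \<delta>(1) show ?thesis by (intro that[of "2 / \<delta>"]) simp_all
qed

section \<open>Operators bounded below by a rank-one operator\<close>

lemma linear_funpow:
  fixes f :: "'a::real_vector \<Rightarrow> 'a"
  assumes "linear f"
  shows "linear (f ^^ n)"
proof (rule linearI)
  show "(f ^^ n) (x + y) = (f ^^ n) x + (f ^^ n) y" for x y
    by (induction n) (simp_all add: linear_add[OF assms])
  show "(f ^^ n) (c *\<^sub>R x) = c *\<^sub>R (f ^^ n) x" for c x
    by (induction n) (simp_all add: linear_scale[OF assms])
qed

lemma continuous_on_funpow:
  fixes f :: "'a::topological_space \<Rightarrow> 'a"
  assumes "continuous_on UNIV f"
  shows "continuous_on UNIV (f ^^ n)"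
proof (induction n)
  case (Suc n)
  then have "continuous_on UNIV (f \<circ> (f ^^ n))"
    using assms by (intro continuous_on_compose) (auto intro: continuous_on_subset)
  then show ?case by simp
qed (simp add: continuous_on_id)

lemma funpow_scaleR_linear:
  fixes r :: "'a::real_vector \<Rightarrow> 'a"
  assumes "linear r"
  shows "((\<lambda>x. c *\<^sub>R r x) ^^ n) x = (c ^ n) *\<^sub>R (r ^^ n) x"
  by (induction n) (simp_all add: linear_scale[OF assms])

lemma positive_linear_mono:
  fixes P :: "'a::ordered_real_vector \<Rightarrow> 'b::ordered_real_vector"
  assumes "linear P" "\<And>x. 0 \<le> x \<Longrightarrow> 0 \<le> P x" "x \<le> y"
  shows "P x \<le> P y"
  using assms(2)[of "y - x"] assms(3) by (simp add: linear_diff[OF assms(1)] diff_ge_0_iff_ge)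

lemma labs_positive_linear_le:
  fixes P :: "'a::{ordered_real_vector,lattice} \<Rightarrow> 'b::{ordered_real_vector,lattice}"
  assumes P: "linear P" "\<And>x. 0 \<le> x \<Longrightarrow> 0 \<le> P x" and Pu: "P u \<le> a *\<^sub>R v"
    and t: "0 \<le> t" and y: "labs y \<le> t *\<^sub>R u"
  shows "labs (P y) \<le> (t * a) *\<^sub>R v"
proof -
  have "P y \<le> t *\<^sub>R P u" "- P y \<le> t *\<^sub>R P u"
    using positive_linear_mono[OF P, of y "t *\<^sub>R u"] positive_linear_mono[OF P, of "- y" "t *\<^sub>R u"]
      y
    by (simp_all add: labs_le_iff linear_scale[OF P(1)] linear_neg[OF P(1)])
  moreover have "t *\<^sub>R P u \<le> (t * a) *\<^sub>R v"
    using scaleR_left_mono[OF Pu t] by simp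
  ultimately show ?thesis
    unfolding labs_le_iff by (meson order_trans)
qed

lemma abs_positive_functional_le:
  fixes ph :: "'a::{ordered_real_vector,lattice} \<Rightarrow> real"
  assumes "linear ph" "\<And>x. 0 \<le> x \<Longrightarrow> 0 \<le> ph x" "labs y \<le> t *\<^sub>R u"
  shows "\<bar>ph y\<bar> \<le> t * ph u"
  using positive_linear_mono[OF assms(1,2), of y "t *\<^sub>R u"]
    positive_linear_mono[OF assms(1,2), of "- y" "t *\<^sub>R u"]
    assms(3)
  by (simp add: labs_le_iff linear_scale[OF assms(1)] linear_neg[OF assms(1)])

text \<open>On the real part, \<open>T \<succeq> - u \<otimes> ph\<close> means that \<open>T + K u \<otimes> ph\<close> is positive for some \<open>K\<close>.\<close>
definition tensor_bounded_below :: "'a::ordered_real_vector \<Rightarrow> ('a \<Rightarrow> real) \<Rightarrow> ('a \<Rightarrow> 'a) \<Rightarrow> bool" where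
  "tensor_bounded_below u ph T \<longleftrightarrow> (\<exists>K. \<forall>x\<ge>0. - ((K * ph x) *\<^sub>R u) \<le> T x)"

lemma tensor_bounded_below_add:
  assumes "tensor_bounded_below u ph S" "tensor_bounded_below u ph T"
  shows "tensor_bounded_below u ph (\<lambda>x. S x + T x)"
proof -
  obtain K L where K: "\<forall>x\<ge>0. - ((K * ph x) *\<^sub>R u) \<le> S x"
    and L: "\<forall>x\<ge>0. - ((L * ph x) *\<^sub>R u) \<le> T x"
    using assms unfolding tensor_bounded_below_def by blast
  have "- (((K + L) * ph x) *\<^sub>R u) \<le> S x + T x" if "0 \<le> x" for x
  proof -
    have "- (((K + L) * ph x) *\<^sub>R u) = - ((K * ph x) *\<^sub>R u) + - ((L * ph x) *\<^sub>R u)"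
      by (simp add: algebra_simps scaleR_add_left)
    also have "\<dots> \<le> S x + T x"
      using K L that by (intro add_mono) auto
    finally show ?thesis .
  qed
  then show ?thesis unfolding tensor_bounded_below_def by blast
qed

lemma tensor_bounded_below_scaleR:
  assumes "tensor_bounded_below u ph T" "0 \<le> c"
  shows "tensor_bounded_below u ph (\<lambda>x. c *\<^sub>R T x)"
proof -
  obtain K where "\<forall>x\<ge>0. - ((K * ph x) *\<^sub>R u) \<le> T x"
    using assms unfolding tensor_bounded_below_def by blast
  then have "\<forall>x\<ge>0. - (((c * K) * ph x) *\<^sub>R u) \<le> c *\<^sub>R T x"
    using scaleR_left_mono[OF _ assms(2)] by (metis mult.assoc scaleR_minus_right scaleR_scaleR)
  then show ?thesis unfolding tensor_bounded_below_def by blast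
qed

lemma tensor_bounded_below_sum:
  fixes n :: nat
  assumes "\<And>k. k < n \<Longrightarrow> tensor_bounded_below u ph (T k)"
  shows "tensor_bounded_below u ph (\<lambda>x. \<Sum>k<n. T k x)"
  using assms
proof (induction n)
  case 0
  then show ?case by (auto simp: tensor_bounded_below_def intro: exI[of _ 0])
next
  case (Suc n)
  then show ?case by (simp add: tensor_bounded_below_add)
qed

lemma tensor_bounded_below_of_labs_le:
  assumes "0 \<le> u" "\<And>x. 0 \<le> x \<Longrightarrow> labs (T x) \<le> (K * ph x) *\<^sub>R u"
  shows "tensor_bounded_below u ph T"
  using assms unfolding tensor_bounded_below_def labs_le_iff by (metis minus_le_iff)

lemma tensor_bounded_below_iff_positive:
  assumes "\<And>x. 0 \<le> x \<Longrightarrow> 0 \<le> ph x" "0 \<le> u"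
  shows "tensor_bounded_below u ph T \<longleftrightarrow> (\<exists>c>0. \<forall>x\<ge>0. 0 \<le> T x + (c * ph x) *\<^sub>R u)"
proof
  assume "tensor_bounded_below u ph T"
  then obtain K where K: "\<And>x. 0 \<le> x \<Longrightarrow> - ((K * ph x) *\<^sub>R u) \<le> T x"
    unfolding tensor_bounded_below_def by blast
  have "0 \<le> T x + (max K 1 * ph x) *\<^sub>R u" if "0 \<le> x" for x
  proof -
    have "0 \<le> T x + (K * ph x) *\<^sub>R u"
      using add_right_mono[OF K[OF that], of "(K * ph x) *\<^sub>R u"] by simp
    also have "(K * ph x) *\<^sub>R u \<le> (max K 1 * ph x) *\<^sub>R u"
      using assms that by (intro scaleR_right_mono mult_right_mono) simp_all
    finally show ?thesis by simp
  qed
  then show "\<exists>c>0. \<forall>x\<ge>0. 0 \<le> T x + (c * ph x) *\<^sub>R u"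
    by (intro exI[of _ "max K 1"]) simp
next
  assume "\<exists>c>0. \<forall>x\<ge>0. 0 \<le> T x + (c * ph x) *\<^sub>R u"
  then obtain c where c: "\<And>x. 0 \<le> x \<Longrightarrow> 0 \<le> T x + (c * ph x) *\<^sub>R u" by blast
  have "- ((c * ph x) *\<^sub>R u) \<le> T x" if "0 \<le> x" for x
    using add_right_mono[OF c[OF that], of "- ((c * ph x) *\<^sub>R u)"] by simp
  then show "tensor_bounded_below u ph T"
    unfolding tensor_bounded_below_def by blast
qed

lemma linear_rank_one_perturbation:
  "linear r \<Longrightarrow> linear ph \<Longrightarrow> linear (\<lambda>x. r x + (c * ph x) *\<^sub>R u)"
  by (rule linearI) (simp_all add: linear_add linear_scale algebra_simps scaleR_add_left)

lemma positive_funpow_bound: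
  fixes P :: "'a::ordered_real_vector \<Rightarrow> 'a" and ph :: "'a \<Rightarrow> real"
  assumes P: "\<And>x. 0 \<le> x \<Longrightarrow> 0 \<le> P x" and b: "0 \<le> b" "\<And>x. 0 \<le> x \<Longrightarrow> ph (P x) \<le> b * ph x"
    and x: "0 \<le> x"
  shows "0 \<le> (P ^^ k) x \<and> ph ((P ^^ k) x) \<le> b ^ k * ph x"
proof (induction k)
  case (Suc k)
  have "ph (P ((P ^^ k) x)) \<le> b * ph ((P ^^ k) x)"
    using b(2) Suc by blast
  also have "\<dots> \<le> b * (b ^ k * ph x)"
    using conjunct2[OF Suc] b(1) by (rule mult_left_mono)
  finally show ?case
    using P Suc by (simp add: mult.assoc)
qed (use x in simp)

lemma labs_perturbation_step:
  fixes r :: "'a::{ordered_real_vector,lattice} \<Rightarrow> 'a" and ph :: "'a \<Rightarrow> real"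
    and u :: 'a and c :: real
  defines "P \<equiv> \<lambda>x. r x + (c * ph x) *\<^sub>R u"
  assumes r: "linear r" and ph: "linear ph" "\<And>x. 0 \<le> x \<Longrightarrow> 0 \<le> ph x" and u: "0 \<le> u"
    and P_pos: "\<And>x. 0 \<le> x \<Longrightarrow> 0 \<le> P x" and a: "P u \<le> a *\<^sub>R u"
    and t: "0 \<le> t" and d: "labs d \<le> t *\<^sub>R u" and y: "0 \<le> y"
  shows "labs (r (d + y) - P y) \<le> (t * a + \<bar>c\<bar> * t * ph u + \<bar>c\<bar> * ph y) *\<^sub>R u"
proof -
  have P: "linear P"
    unfolding P_def by (rule linear_rank_one_perturbation[OF r ph(1)])
  have "r (d + y) - P y = P d + (- (c * ph d)) *\<^sub>R u + (- (c * ph y)) *\<^sub>R u"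
    by (simp add: P_def linear_add[OF r] algebra_simps scaleR_diff_left)
  also have "labs \<dots> \<le> labs (P d) + labs ((- (c * ph d)) *\<^sub>R u) + labs ((- (c * ph y)) *\<^sub>R u)"
    by (meson labs_triangle add_right_mono order_trans)
  also have "\<dots> \<le> (t * a) *\<^sub>R u + \<bar>c * ph d\<bar> *\<^sub>R u + \<bar>c * ph y\<bar> *\<^sub>R u"
    using labs_positive_linear_le[OF P P_pos a t d] by (simp add: labs_scaleR_of_nonneg[OF u])
  also have "\<dots> \<le> (t * a + \<bar>c\<bar> * t * ph u + \<bar>c\<bar> * ph y) *\<^sub>R u"
  proof -
    have "\<bar>c * ph d\<bar> \<le> \<bar>c\<bar> * t * ph u"
      using mult_left_mono[OF abs_positive_functional_le[OF ph d], of "\<bar>c\<bar>"]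
      by (simp add: abs_mult mult_ac)
    moreover have "\<bar>c * ph y\<bar> = \<bar>c\<bar> * ph y"
      using ph(2)[OF y] by (simp add: abs_mult)
    ultimately show ?thesis
      by (auto simp: algebra_simps simp flip: scaleR_add_left intro!: scaleR_right_mono u)
  qed
  finally show ?thesis .
qed

lemma tensor_bounded_below_funpow_of_positive_perturbation:
  fixes r :: "'a::{ordered_real_vector,lattice} \<Rightarrow> 'a" and ph :: "'a \<Rightarrow> real"
    and u :: 'a and c :: real
  defines "P \<equiv> \<lambda>x. r x + (c * ph x) *\<^sub>R u"
  assumes r: "linear r" and ph: "linear ph" "\<And>x. 0 \<le> x \<Longrightarrow> 0 \<le> ph x" and u: "0 \<le> u"
    and P_pos: "\<And>x. 0 \<le> x \<Longrightarrow> 0 \<le> P x"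
    and a: "0 \<le> a" "P u \<le> a *\<^sub>R u" and b: "0 \<le> b" "\<And>x. 0 \<le> x \<Longrightarrow> ph (P x) \<le> b * ph x"
  shows "tensor_bounded_below u ph (r ^^ n)"
proof -
  have P_pow: "0 \<le> (P ^^ k) x \<and> ph ((P ^^ k) x) \<le> b ^ k * ph x" if "0 \<le> x" for k x
    using P_pos b that by (rule positive_funpow_bound)
  have "\<exists>K\<ge>0. \<forall>x\<ge>0. labs ((r ^^ k) x - (P ^^ k) x) \<le> (K * ph x) *\<^sub>R u" for k
  proof (induction k)
    case 0
    then show ?case by (auto simp: labs_def intro: exI[of _ 0])
  next
    case (Suc k)
    then obtain K where K: "0 \<le> K" "\<And>x. 0 \<le> x \<Longrightarrow> labs ((r ^^ k) x - (P ^^ k) x) \<le> (K * ph x) *\<^sub>R u"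
      by blast
    define K' where "K' = K * a + \<bar>c\<bar> * K * ph u + \<bar>c\<bar> * b ^ k"
    have "labs ((r ^^ Suc k) x - (P ^^ Suc k) x) \<le> (K' * ph x) *\<^sub>R u" if x: "0 \<le> x" for x
    proof -
      have "labs ((r ^^ Suc k) x - (P ^^ Suc k) x)
          = labs (r (((r ^^ k) x - (P ^^ k) x) + (P ^^ k) x) - P ((P ^^ k) x))"
        by simp
      also have "\<dots> \<le> ((K * ph x) * a + \<bar>c\<bar> * (K * ph x) * ph u + \<bar>c\<bar> * ph ((P ^^ k) x)) *\<^sub>R u"
        unfolding P_def
        by (rule labs_perturbation_step[OF r ph u P_pos[unfolded P_def] a(2)[unfolded P_def]])
          (use K(1) K(2)[OF x] ph(2)[OF x] P_pow[OF x, of k] in \<open>simp_all add: P_def\<close>)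
      also have "\<dots> \<le> (K' * ph x) *\<^sub>R u"
        using P_pow[OF x, of k] u unfolding K'_def
        by (intro scaleR_right_mono) (simp_all add: algebra_simps mult_left_mono)
      finally show ?thesis .
    qed
    moreover have "0 \<le> K'"
      unfolding K'_def using K(1) a(1) b(1) ph(2)[OF u] by simp
    ultimately show ?case by blast
  qed
  then obtain K where K: "\<And>x. 0 \<le> x \<Longrightarrow> labs ((r ^^ n) x - (P ^^ n) x) \<le> (K * ph x) *\<^sub>R u"
    by blast
  have "- ((K * ph x) *\<^sub>R u) \<le> (r ^^ n) x" if "0 \<le> x" for x
  proof -
    have "- ((K * ph x) *\<^sub>R u) \<le> (r ^^ n) x - (P ^^ n) x"
      using K[OF that] unfolding labs_le_iff by (metis minus_diff_eq minus_le_iff)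
    also have "\<dots> \<le> (r ^^ n) x" using P_pow[OF that] by simp
    finally show ?thesis .
  qed
  then show ?thesis unfolding tensor_bounded_below_def by blast
qed

lemma funpow_fixpoint_expansion:
  fixes s w :: "'a::real_vector \<Rightarrow> 'a"
  assumes s: "linear s" and w: "\<And>x. w x = s x + t *\<^sub>R s (w x)"
  shows "w x = (\<Sum>k<n. t ^ k *\<^sub>R (s ^^ Suc k) x) + t ^ n *\<^sub>R (s ^^ n) (w x)"
proof (induction n)
  case (Suc n)
  have "(s ^^ n) (w x) = (s ^^ n) (s x) + t *\<^sub>R (s ^^ n) (s (w x))"
    by (subst w) (simp add: linear_add[OF linear_funpow[OF s]] linear_scale[OF linear_funpow[OF s]])
  then have "t ^ n *\<^sub>R (s ^^ n) (w x) = t ^ n *\<^sub>R (s ^^ Suc n) x + t ^ Suc n *\<^sub>R (s ^^ Suc n) (w x)"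
    by (simp only: funpow_Suc_right o_apply scaleR_add_right scaleR_scaleR power_Suc2)
  with Suc.IH show ?case
    unfolding sum.lessThan_Suc add.assoc by simp
qed simp

lemma tensor_bounded_below_of_fixpoint:
  fixes s w :: "'a::ordered_real_vector \<Rightarrow> 'a"
  assumes s: "linear s" and t: "0 \<le> t" and w: "\<And>x. w x = s x + t *\<^sub>R s (w x)"
    and powers: "\<And>k. tensor_bounded_below u ph (s ^^ k)"
    and remainder: "tensor_bounded_below u ph (\<lambda>x. (s ^^ N) (w x))"
  shows "tensor_bounded_below u ph w"
proof -
  have expansion: "w = (\<lambda>x. (\<Sum>k<N. t ^ k *\<^sub>R (s ^^ Suc k) x) + t ^ N *\<^sub>R (s ^^ N) (w x))"
    by (rule ext) (rule funpow_fixpoint_expansion[OF s w])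
  show ?thesis
    by (subst expansion) (intro tensor_bounded_below_add tensor_bounded_below_sum
        tensor_bounded_below_scaleR powers remainder zero_le_power t)
qed

text \<open>\<open>v\<close> and \<open>ps\<close> stand for the real parts of the eigenvectors of \<open>A\<close> and \<open>A'\<close>
  from the spectral hypothesis.\<close>
locale eigen_frame =
  fixes u v :: "'a::{ordered_real_vector,lattice}" and ph ps :: "'a \<Rightarrow> real"
  assumes u_nonneg: "0 \<le> u"
    and ph_linear: "linear ph" and ph_nonneg: "\<And>x. 0 \<le> x \<Longrightarrow> 0 \<le> ph x"
    and ps_linear: "linear ps"
    and v_succeq: "vec_succeq v u" and v_ideal: "\<exists>M\<ge>0. v \<le> M *\<^sub>R u"
    and ps_succeq: "\<exists>\<epsilon>>0. \<forall>x\<ge>0. \<epsilon> * ph x \<le> ps x" and ps_ideal: "\<exists>M\<ge>0. \<forall>x\<ge>0. ps x \<le> M * ph x"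
begin

lemma v_nonneg: "0 \<le> v"
  using v_succeq u_nonneg unfolding vec_succeq_def
  by (meson order_trans scaleR_nonneg_nonneg less_imp_le)

lemma scaleR_v_bound: "\<exists>M. \<kappa> *\<^sub>R v \<le> M *\<^sub>R u"
proof -
  obtain M where "v \<le> M *\<^sub>R u" using v_ideal by blast
  then have "\<kappa> *\<^sub>R v \<le> (\<bar>\<kappa>\<bar> * M) *\<^sub>R u"
    using scaleR_right_mono[OF abs_ge_self v_nonneg] scaleR_left_mono[of v "M *\<^sub>R u" "\<bar>\<kappa>\<bar>"]
    by (metis abs_ge_zero order_trans scaleR_scaleR)
  then show ?thesis by blast
qed

lemma scaled_ps_bound: "\<exists>M. \<forall>x\<ge>0. \<kappa> * ps x \<le> M * ph x"
proof -
  obtain \<epsilon> M where \<epsilon>: "\<epsilon> > 0" "\<And>x. 0 \<le> x \<Longrightarrow> \<epsilon> * ph x \<le> ps x"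
    and M: "\<And>x. 0 \<le> x \<Longrightarrow> ps x \<le> M * ph x"
    using ps_succeq ps_ideal by blast
  have "\<kappa> * ps x \<le> (\<bar>\<kappa>\<bar> * M) * ph x" if x: "0 \<le> x" for x
  proof -
    have "0 \<le> ps x"
      using \<epsilon>(2)[OF x] \<epsilon>(1) ph_nonneg[OF x] by (meson mult_nonneg_nonneg less_imp_le order_trans)
    then have "\<kappa> * ps x \<le> \<bar>\<kappa>\<bar> * ps x" by (simp add: mult_right_mono)
    also have "\<dots> \<le> \<bar>\<kappa>\<bar> * (M * ph x)" using M[OF x] by (simp add: mult_left_mono)
    finally show ?thesis by (simp add: mult.assoc)
  qed
  then show ?thesis by blast
qed

lemma order_bound_of_positive:
  assumes P: "linear P" "\<And>x. 0 \<le> x \<Longrightarrow> 0 \<le> P x" and Pv: "P v \<le> a *\<^sub>R u"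
  shows "\<exists>a'\<ge>0. P u \<le> a' *\<^sub>R u"
proof -
  obtain \<epsilon> where \<epsilon>: "\<epsilon> > 0" "\<epsilon> *\<^sub>R u \<le> v"
    using v_succeq unfolding vec_succeq_def by blast
  have "\<epsilon> *\<^sub>R P u \<le> a *\<^sub>R u"
    using positive_linear_mono[OF P \<epsilon>(2)] Pv by (simp add: linear_scale[OF P(1)])
  then have "(1 / \<epsilon>) *\<^sub>R \<epsilon> *\<^sub>R P u \<le> (1 / \<epsilon>) *\<^sub>R a *\<^sub>R u"
    using \<epsilon>(1) by (intro scaleR_left_mono) simp_all
  then have "P u \<le> (a / \<epsilon>) *\<^sub>R u"
    using \<epsilon>(1) by simp
  also have "\<dots> \<le> max (a / \<epsilon>) 0 *\<^sub>R u"
    using u_nonneg by (intro scaleR_right_mono) simp_all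
  finally show ?thesis by (intro exI[of _ "max (a / \<epsilon>) 0"]) simp
qed

lemma functional_bound_of_positive:
  assumes P: "\<And>x. 0 \<le> x \<Longrightarrow> 0 \<le> P x" and psP: "\<And>x. 0 \<le> x \<Longrightarrow> ps (P x) \<le> b * ph x"
  shows "\<exists>b'\<ge>0. \<forall>x\<ge>0. ph (P x) \<le> b' * ph x"
proof -
  obtain \<epsilon> where \<epsilon>: "\<epsilon> > 0" "\<And>x. 0 \<le> x \<Longrightarrow> \<epsilon> * ph x \<le> ps x"
    using ps_succeq by blast
  have "ph (P x) \<le> max (b / \<epsilon>) 0 * ph x" if x: "0 \<le> x" for x
  proof -
    have "\<epsilon> * ph (P x) \<le> b * ph x"
      using \<epsilon>(2)[OF P[OF x]] psP[OF x] by linarith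
    then have "ph (P x) \<le> (b / \<epsilon>) * ph x"
      using \<epsilon>(1) by (simp add: field_simps)
    also have "\<dots> \<le> max (b / \<epsilon>) 0 * ph x"
      using ph_nonneg[OF x] by (intro mult_right_mono) simp_all
    finally show ?thesis .
  qed
  then show ?thesis by (intro exI[of _ "max (b / \<epsilon>) 0"]) simp
qed

lemma tensor_bounded_below_funpow:
  assumes r: "linear r" and rv: "r v = \<kappa> *\<^sub>R v" and psr: "\<And>x. ps (r x) = \<kappa> * ps x"
    and bounded: "tensor_bounded_below u ph r"
  shows "tensor_bounded_below u ph (r ^^ n)"
proof -
  have "\<exists>c>0. \<forall>x\<ge>0. 0 \<le> r x + (c * ph x) *\<^sub>R u"
    using bounded tensor_bounded_below_iff_positive[OF ph_nonneg u_nonneg] by simp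
  then obtain c where c: "\<forall>x\<ge>0. 0 \<le> r x + (c * ph x) *\<^sub>R u"
    by blast
  define P where "P = (\<lambda>x. r x + (c * ph x) *\<^sub>R u)"
  have P: "linear P" "\<And>x. 0 \<le> x \<Longrightarrow> 0 \<le> P x"
    unfolding P_def using linear_rank_one_perturbation[OF r ph_linear] c by simp_all
  obtain M where "\<kappa> *\<^sub>R v \<le> M *\<^sub>R u" using scaleR_v_bound by blast
  then have "P v \<le> (M + c * ph v) *\<^sub>R u"
    by (simp add: P_def rv scaleR_add_left)
  from order_bound_of_positive[OF P this]
  obtain a where a: "0 \<le> a" "P u \<le> a *\<^sub>R u" by blast
  obtain M' where M': "\<And>x. 0 \<le> x \<Longrightarrow> \<kappa> * ps x \<le> M' * ph x" using scaled_ps_bound by blast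
  have "ps (P x) \<le> (M' + c * ps u) * ph x" if "0 \<le> x" for x
  proof -
    have "ps (P x) = \<kappa> * ps x + c * ph x * ps u"
      by (simp add: P_def linear_add[OF ps_linear] linear_scale[OF ps_linear] psr)
    with M'[OF that] show ?thesis by (simp add: algebra_simps)
  qed
  from functional_bound_of_positive[OF P(2) this]
  obtain b where b: "0 \<le> b" "\<And>x. 0 \<le> x \<Longrightarrow> ph (P x) \<le> b * ph x" by blast
  from tensor_bounded_below_funpow_of_positive_perturbation[OF r ph_linear ph_nonneg u_nonneg
      P(2)[unfolded P_def] a(1) a(2)[unfolded P_def] b(1) b(2)[unfolded P_def]]
  show ?thesis .
qed

lemma tensor_bounded_below_transfer:
  assumes s: "linear s" "s v = \<kappa> *\<^sub>R v" "\<And>x. ps (s x) = \<kappa> * ps x"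
    and w: "linear w" "w v = \<kappa>' *\<^sub>R v" "\<And>x. ps (w x) = \<kappa>' * ps x"
    and t: "0 \<le> t" and fixpoint: "\<And>x. w x = s x + t *\<^sub>R s (w x)"
    and remainder: "tensor_bounded_below u ph (\<lambda>x. (s ^^ N) (w x))"
    and bounded: "tensor_bounded_below u ph s"
  shows "tensor_bounded_below u ph (w ^^ n)"
proof -
  have "tensor_bounded_below u ph (s ^^ k)" for k
    by (rule tensor_bounded_below_funpow[OF s bounded])
  then have "tensor_bounded_below u ph w"
    by (rule tensor_bounded_below_of_fixpoint[OF s(1) t fixpoint _ remainder])
  then show ?thesis
    by (rule tensor_bounded_below_funpow[OF w])
qed

end

section \<open>Real operators on the complexification\<close>

lemma cscale_of_real [simp]: "cscale (complex_of_real r) z = r *\<^sub>R z"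
  unfolding cscale_def by (simp add: prod_eq_iff)

lemma cscale_diff: "cscale c (x - y) = cscale c x - cscale c y"
  unfolding cscale_def by (simp add: algebra_simps prod_eq_iff scaleR_diff_right)

lemma cscale_scaleR: "cscale c (r *\<^sub>R x) = r *\<^sub>R cscale c x"
  unfolding cscale_def by (simp add: algebra_simps prod_eq_iff scaleR_diff_right)

lemma cscale_real_pair: "cscale c (x, 0) = (Re c *\<^sub>R x, Im c *\<^sub>R x)"
  unfolding cscale_def by simp

lemma pair_eq_real_plus_imaginary: "(x, y) = (x, 0) + cscale \<i> (y, 0)"
  unfolding cscale_def by simp

lemma cdualD:
  assumes "x' \<in> cdual"
  shows "x' (f + g) = x' f + x' g" "x' (cscale c f) = c * x' f" "continuous_on UNIV x'"
  using assms unfolding cdual_def by blast+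

lemma cdual_scaleR: "x' \<in> cdual \<Longrightarrow> x' (r *\<^sub>R f) = r * x' f"
  using cdualD(2)[of x' "complex_of_real r" f] by simp

lemma cdual_diff: "x' \<in> cdual \<Longrightarrow> x' (f - g) = x' f - x' g"
  using cdualD(1)[of x' f "- g"] cdual_scaleR[of x' "- 1" g] by simp

lemma cdual_lincomb:
  assumes "x' \<in> cdual" "y' \<in> cdual"
  shows "(\<lambda>f. a * x' f + b * y' f) \<in> cdual"
  using cdualD[OF assms(1)] cdualD[OF assms(2)]
  unfolding cdual_def by (auto simp: algebra_simps intro!: continuous_intros)

lemma cdual_compose:
  assumes "x' \<in> cdual" "\<And>f g. T (f + g) = T f + T g" "\<And>c f. T (cscale c f) = cscale c (T f)"
    "continuous_on UNIV T"
  shows "(\<lambda>f. x' (T f)) \<in> cdual"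
  unfolding cdual_def
proof (intro CollectI conjI allI)
  show "x' (T (f + g)) = x' (T f) + x' (T g)" for f g
    by (simp add: assms(2) cdualD(1)[OF assms(1)])
  show "x' (T (cscale c f)) = c * x' (T f)" for c f
    by (simp add: assms(3) cdualD(2)[OF assms(1)])
  show "continuous_on UNIV (\<lambda>f. x' (T f))"
    by (rule continuous_on_compose2[OF cdualD(3)[OF assms(1)] assms(4)]) simp
qed

definition real_functional :: "('a::real_vector \<times> 'a \<Rightarrow> complex) \<Rightarrow> 'a \<Rightarrow> real" where
  "real_functional \<phi> x = Re (\<phi> (x, 0))"

lemma linear_real_functional:
  assumes "\<phi> \<in> cdual"
  shows "linear (real_functional \<phi>)"
proof (rule linearI)
  show "real_functional \<phi> (x + y) = real_functional \<phi> x + real_functional \<phi> y" for x y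
    using cdualD(1)[OF assms, of "(x, 0)" "(y, 0)"] by (simp add: real_functional_def)
  show "real_functional \<phi> (c *\<^sub>R x) = c *\<^sub>R real_functional \<phi> x" for c x
    using cdual_scaleR[OF assms, of c "(x, 0)"] by (simp add: real_functional_def)
qed

lemma dual_real_eq: "dual_real \<phi> \<Longrightarrow> \<phi> (x, 0) = complex_of_real (real_functional \<phi> x)"
  unfolding dual_real_def real_functional_def by (simp add: complex_eq_iff)

lemma complexified_functional_cdual:
  fixes l :: "'a::real_normed_vector \<Rightarrow>\<^sub>L real"
  shows "(\<lambda>z. complex_of_real (blinfun_apply l (fst z))
      + \<i> * complex_of_real (blinfun_apply l (snd z))) \<in> cdual"
  unfolding cdual_def
proof (intro CollectI conjI allI)
  show "complex_of_real (l (fst (f + g))) + \<i> * complex_of_real (l (snd (f + g)))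
      = complex_of_real (l (fst f)) + \<i> * complex_of_real (l (snd f))
        + (complex_of_real (l (fst g)) + \<i> * complex_of_real (l (snd g)))" for f g
    by (simp add: blinfun.add_right algebra_simps)
  show "complex_of_real (l (fst (cscale c f))) + \<i> * complex_of_real (l (snd (cscale c f)))
      = c * (complex_of_real (l (fst f)) + \<i> * complex_of_real (l (snd f)))" for c f
    by (simp add: cscale_def blinfun.add_right blinfun.diff_right blinfun.scaleR_right
        complex_eq_iff algebra_simps)
  show "continuous_on UNIV
      (\<lambda>z. complex_of_real (l (fst z)) + \<i> * complex_of_real (l (snd z)))"
    by (intro continuous_intros)
qed

lemma tensor_real_pair: "dual_real \<phi> \<Longrightarrow> tensor u \<phi> (x, 0) = (real_functional \<phi> x *\<^sub>R u, 0)"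
  by (simp add: tensor_def cscale_real_pair dual_real_eq)

lemma op_succeq_neg_tensor_iff:
  assumes \<phi>: "dual_pos \<phi>" and u: "0 \<le> u" and T: "\<And>x. T (x, 0) = (t x, 0)"
  shows "op_succeq T (\<lambda>f. - tensor u \<phi> f) \<longleftrightarrow> tensor_bounded_below u (real_functional \<phi>) t"
proof -
  have real: "dual_real \<phi>" and nonneg: "\<And>x. 0 \<le> x \<Longrightarrow> 0 \<le> real_functional \<phi> x"
    using \<phi> unfolding dual_pos_def real_functional_def by auto
  show ?thesis
    unfolding op_succeq_def pos_op_def
    by (simp add: T tensor_real_pair[OF real] tensor_bounded_below_iff_positive[OF nonneg u])
qed

lemma op_succeq_tensor_iff:
  assumes \<phi>: "dual_pos \<phi>" and u: "0 \<le> u" and T: "\<And>x. T (x, 0) = (t x, 0)"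
  shows "op_succeq (tensor u \<phi>) T \<longleftrightarrow> tensor_bounded_below u (real_functional \<phi>) (\<lambda>x. - t x)"
proof -
  have real: "dual_real \<phi>" and nonneg: "\<And>x. 0 \<le> x \<Longrightarrow> 0 \<le> real_functional \<phi> x"
    using \<phi> unfolding dual_pos_def real_functional_def by auto
  have scale: "0 \<le> real_functional \<phi> x *\<^sub>R u - c *\<^sub>R t x
      \<longleftrightarrow> 0 \<le> - t x + ((1 / c) * real_functional \<phi> x) *\<^sub>R u"
    if "c > 0" for c x
  proof -
    have "real_functional \<phi> x *\<^sub>R u - c *\<^sub>R t x
        = c *\<^sub>R (- t x + ((1 / c) * real_functional \<phi> x) *\<^sub>R u)"
      using that by (simp add: algebra_simps)
    then show ?thesis
      using that by (simp add: zero_le_scaleR_iff)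
  qed
  have "(\<exists>c>0. \<forall>x\<ge>0. 0 \<le> real_functional \<phi> x *\<^sub>R u - c *\<^sub>R t x)
      \<longleftrightarrow> (\<exists>c>0. \<forall>x\<ge>0. 0 \<le> - t x + (c * real_functional \<phi> x) *\<^sub>R u)"
  proof
    assume "\<exists>c>0. \<forall>x\<ge>0. 0 \<le> real_functional \<phi> x *\<^sub>R u - c *\<^sub>R t x"
    then obtain c where "c > 0" "\<forall>x\<ge>0. 0 \<le> real_functional \<phi> x *\<^sub>R u - c *\<^sub>R t x" by blast
    then show "\<exists>c>0. \<forall>x\<ge>0. 0 \<le> - t x + (c * real_functional \<phi> x) *\<^sub>R u"
      using scale by (intro exI[of _ "1 / c"]) simp
  next
    assume "\<exists>c>0. \<forall>x\<ge>0. 0 \<le> - t x + (c * real_functional \<phi> x) *\<^sub>R u"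
    then obtain c where "c > 0" "\<forall>x\<ge>0. 0 \<le> - t x + (c * real_functional \<phi> x) *\<^sub>R u" by blast
    then show "\<exists>c>0. \<forall>x\<ge>0. 0 \<le> real_functional \<phi> x *\<^sub>R u - c *\<^sub>R t x"
      using scale[of "1 / c"] by (intro exI[of _ "1 / c"]) simp
  qed
  then show ?thesis
    unfolding op_succeq_def pos_op_def
    by (simp add: T tensor_real_pair[OF real] tensor_bounded_below_iff_positive[OF nonneg u])
qed

lemma adj_eqI:
  assumes dense: "densely_defined D" and x': "x' \<in> cdual" and y': "y' \<in> cdual"
    and eq: "\<And>f. f \<in> D \<Longrightarrow> x' (A f) = y' f"
  shows "adj D A x' = y'"
  unfolding adj_def
proof (rule the_equality)
  fix y'' assume y'': "y'' \<in> cdual \<and> (\<forall>f\<in>D. x' (A f) = y'' f)"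
  have "closed {f. y'' f = y' f}"
    using y'' cdualD(3)[OF y'] by (intro closed_Collect_eq) (simp_all add: cdual_def)
  moreover have "D \<subseteq> {f. y'' f = y' f}" using y'' eq by auto
  ultimately have "closure D \<subseteq> {f. y'' f = y' f}" by (rule closure_minimal[rotated])
  with dense show "y'' = y'" unfolding densely_defined_def by auto
qed (use y' eq in blast)

lemma adj_eigenvector_pow_dom:
  assumes dense: "densely_defined D" and \<psi>: "\<psi> \<in> adj_dom D A" "adj D A \<psi> = (\<lambda>f. lam * \<psi> f)"
  shows "\<psi> \<in> pow_dom cdual (adj_dom D A) (adj D A) k"
proof -
  obtain y' where \<psi>_dual: "\<psi> \<in> cdual" and y': "y' \<in> cdual" "\<forall>f\<in>D. \<psi> (A f) = y' f"
    using \<psi>(1) unfolding adj_dom_def by blast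
  then have "y' = (\<lambda>f. lam * \<psi> f)"
    using \<psi>(2) adj_eqI[OF dense \<psi>_dual y'(1)] by simp
  with y' have \<psi>_adj: "\<psi> (A f) = lam * \<psi> f" if "f \<in> D" for f
    using that by simp
  have dual: "(\<lambda>f. a * \<psi> f) \<in> cdual" for a
    using cdual_lincomb[OF \<psi>_dual \<psi>_dual, of a 0] by simp
  have "(\<lambda>f. c * \<psi> f) \<in> pow_dom cdual (adj_dom D A) (adj D A) k" for c
  proof (induction k arbitrary: c)
    case 0
    show ?case using dual by simp
  next
    case (Suc k)
    have eq: "c * \<psi> (A f) = (c * lam) * \<psi> f" if "f \<in> D" for f
      using \<psi>_adj[OF that] by simp
    then have "adj D A (\<lambda>f. c * \<psi> f) = (\<lambda>f. (c * lam) * \<psi> f)"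
      by (intro adj_eqI[OF dense dual dual])
    moreover have "(\<lambda>f. c * \<psi> f) \<in> adj_dom D A"
      unfolding adj_dom_def using dual[of c] dual[of "c * lam"] eq
      by (intro CollectI conjI bexI[of _ "\<lambda>f. (c * lam) * \<psi> f"] ballI)
    ultimately show ?case using Suc[of "c * lam"] by simp
  qed
  from this[of 1] show ?thesis by simp
qed

locale real_operator =
  fixes D :: "('a::real_normed_vector \<times> 'a) set" and A :: "'a \<times> 'a \<Rightarrow> 'a \<times> 'a"
  assumes linear: "linear_op D A" and real: "real_op D A"
begin

lemma domain_zero: "0 \<in> D"
  and domain_add: "f \<in> D \<Longrightarrow> g \<in> D \<Longrightarrow> f + g \<in> D"
  and domain_cscale: "f \<in> D \<Longrightarrow> cscale c f \<in> D"
  and op_add: "f \<in> D \<Longrightarrow> g \<in> D \<Longrightarrow> A (f + g) = A f + A g"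
  and op_cscale: "f \<in> D \<Longrightarrow> A (cscale c f) = cscale c (A f)"
  using linear unfolding linear_op_def complex_subspace_def by blast+

lemma domain_scaleR: "f \<in> D \<Longrightarrow> r *\<^sub>R f \<in> D"
  using domain_cscale[of f "complex_of_real r"] by simp

lemma op_scaleR: "f \<in> D \<Longrightarrow> A (r *\<^sub>R f) = r *\<^sub>R A f"
  using op_cscale[of f "complex_of_real r"] by simp

lemma op_zero: "A 0 = 0"
  using op_scaleR[OF domain_zero, of 0] by simp

lemma op_pair:
  assumes "(x, y) \<in> D"
  shows "A (x, y) = (fst (A (x, 0)), fst (A (y, 0)))"
proof -
  have xy: "(x, 0) \<in> D" "(y, 0) \<in> D" and "snd (A (x, 0)) = 0" "snd (A (y, 0)) = 0"
    using real assms unfolding real_op_def by auto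
  then have "A (x, 0) = (fst (A (x, 0)), 0)" "A (y, 0) = (fst (A (y, 0)), 0)"
    by (simp_all add: prod_eq_iff)
  moreover have "A (x, y) = A (x, 0) + cscale \<i> (A (y, 0))"
    by (subst pair_eq_real_plus_imaginary) (simp add: op_add op_cscale domain_cscale xy)
  ultimately show ?thesis by (metis pair_eq_real_plus_imaginary add.commute)
qed

lemma eigenvector_pow_dom:
  assumes "g \<in> D" "A g = lam *\<^sub>R g"
  shows "g \<in> pow_dom UNIV D A k"
proof -
  have "r *\<^sub>R g \<in> pow_dom UNIV D A k" for r
    by (induction k arbitrary: r) (simp_all add: assms domain_scaleR op_scaleR)
  from this[of 1] show ?thesis by simp
qed

end

definition real_resolvent :: "('a::real_normed_vector \<times> 'a) set \<Rightarrow> ('a \<times> 'a \<Rightarrow> 'a \<times> 'a) \<Rightarrow> real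
    \<Rightarrow> 'a \<Rightarrow> 'a" where
  "real_resolvent D A \<mu> x = fst (resolvent D A (complex_of_real \<mu>) (x, 0))"

locale real_regular_point = real_operator +
  fixes \<mu> :: real
  assumes regular: "complex_of_real \<mu> \<in> resolvent_set D A"
begin

abbreviation "R \<equiv> resolvent D A (complex_of_real \<mu>)"
abbreviation "r \<equiv> real_resolvent D A \<mu>"

lemma resolvent_unique_solution: "\<exists>!g. g \<in> D \<and> \<mu> *\<^sub>R g - A g = f"
proof -
  have bij: "bij_betw (\<lambda>g. \<mu> *\<^sub>R g - A g) D UNIV"
    using regular unfolding resolvent_set_def by simp
  then have "f \<in> (\<lambda>g. \<mu> *\<^sub>R g - A g) ` D"
    unfolding bij_betw_def by simp
  then obtain g where g: "g \<in> D" "\<mu> *\<^sub>R g - A g = f"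
    by blast
  moreover have "g' = g" if "g' \<in> D" "\<mu> *\<^sub>R g' - A g' = f" for g'
    using bij g that unfolding bij_betw_def inj_on_def by metis
  ultimately show ?thesis by blast
qed

lemma resolvent_mem: "R f \<in> D" and resolvent_eq: "\<mu> *\<^sub>R R f - A (R f) = f"
  using theI'[OF resolvent_unique_solution[of f]] unfolding resolvent_def by simp_all

lemma resolvent_eqI: "g \<in> D \<Longrightarrow> \<mu> *\<^sub>R g - A g = f \<Longrightarrow> R f = g"
  using resolvent_unique_solution[of f] resolvent_mem[of f] resolvent_eq[of f] by blast

lemma resolvent_add: "R (f + g) = R f + R g"
proof (rule resolvent_eqI)
  show "R f + R g \<in> D" by (simp add: domain_add resolvent_mem)
  have "\<mu> *\<^sub>R (R f + R g) - A (R f + R g) = (\<mu> *\<^sub>R R f - A (R f)) + (\<mu> *\<^sub>R R g - A (R g))"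
    by (simp add: op_add resolvent_mem algebra_simps scaleR_add_right)
  then show "\<mu> *\<^sub>R (R f + R g) - A (R f + R g) = f + g"
    by (simp only: resolvent_eq)
qed

lemma resolvent_cscale: "R (cscale c f) = cscale c (R f)"
proof (rule resolvent_eqI)
  show "cscale c (R f) \<in> D" by (simp add: domain_cscale resolvent_mem)
  have "\<mu> *\<^sub>R cscale c (R f) - A (cscale c (R f)) = cscale c (\<mu> *\<^sub>R R f - A (R f))"
    by (simp add: op_cscale resolvent_mem cscale_diff cscale_scaleR)
  then show "\<mu> *\<^sub>R cscale c (R f) - A (cscale c (R f)) = cscale c f"
    by (simp only: resolvent_eq)
qed

lemma resolvent_scaleR: "R (t *\<^sub>R f) = t *\<^sub>R R f"
  using resolvent_cscale[of "complex_of_real t"] by simp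

lemma resolvent_diff: "R (f - g) = R f - R g"
  using resolvent_add[of f "- g"] resolvent_scaleR[of "- 1" g] by simp

lemma resolvent_op: "f \<in> D \<Longrightarrow> R (A f) = \<mu> *\<^sub>R R f - f"
  using resolvent_eqI[of f "\<mu> *\<^sub>R f - A f"] resolvent_diff[of "\<mu> *\<^sub>R f" "A f"]
  by (simp add: resolvent_scaleR algebra_simps)

lemma resolvent_real: "R (x, 0) = (r x, 0)"
proof -
  obtain a b where ab: "R (x, 0) = (a, b)" by fastforce
  then have "(a, b) \<in> D" using resolvent_mem by metis
  then have b: "(b, 0) \<in> D" using real unfolding real_op_def by auto
  have "\<mu> *\<^sub>R (a, b) - A (a, b) = (x, 0)" using resolvent_eq ab by metis
  then have "\<mu> *\<^sub>R (b, 0) - A (b, 0) = 0"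
    using op_pair[OF \<open>(a, b) \<in> D\<close>] op_pair[OF b] op_zero by (simp add: prod_eq_iff zero_prod_def)
  then have "(b, 0) = R 0" using resolvent_eqI[OF b] by simp
  also have "R 0 = 0" using resolvent_scaleR[of 0 0] by simp
  finally show ?thesis using ab by (simp add: real_resolvent_def zero_prod_def)
qed

lemma linear_real_resolvent: "linear r"
proof (rule linearI)
  show "r (x + y) = r x + r y" for x y
    using resolvent_add[of "(x, 0)" "(y, 0)"] by (simp add: resolvent_real)
  show "r (c *\<^sub>R x) = c *\<^sub>R r x" for c x
    using resolvent_scaleR[of c "(x, 0)"] by (simp add: resolvent_real)
qed

lemma continuous_real_resolvent: "continuous_on UNIV r"
  using regular unfolding resolvent_set_def real_resolvent_def
  by (auto intro!: continuous_intros continuous_on_compose2[of UNIV R])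

lemma resolvent_funpow_real: "(R ^^ n) (x, 0) = ((r ^^ n) x, 0)"
  by (induction n) (simp_all add: resolvent_real)

lemma resolvent_funpow_diff: "(R ^^ k) (f - g) = (R ^^ k) f - (R ^^ k) g"
  by (induction k) (simp_all add: resolvent_diff)

lemma resolvent_funpow_scaleR: "(R ^^ k) (t *\<^sub>R f) = t *\<^sub>R (R ^^ k) f"
  by (induction k) (simp_all add: resolvent_scaleR)

lemma resolvent_funpow_op_shift: "A (R ((R ^^ k) g)) = (R ^^ k) (\<mu> *\<^sub>R R g - g)"
proof -
  have "A (R ((R ^^ k) g)) = \<mu> *\<^sub>R R ((R ^^ k) g) - (R ^^ k) g"
    using resolvent_eq[of "(R ^^ k) g"] by (simp add: algebra_simps)
  moreover have "(R ^^ k) (\<mu> *\<^sub>R R g - g) = \<mu> *\<^sub>R R ((R ^^ k) g) - (R ^^ k) g"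
    by (simp add: resolvent_funpow_diff resolvent_funpow_scaleR funpow_swap1)
  ultimately show ?thesis by simp
qed

lemma resolvent_funpow_pow_dom: "(R ^^ k) g \<in> pow_dom UNIV D A k"
proof (induction k arbitrary: g)
  case (Suc k)
  show ?case
    using Suc.IH[of "\<mu> *\<^sub>R R g - g"] by (simp add: resolvent_funpow_op_shift resolvent_mem)
qed simp

lemma cdual_compose_resolvent_funpow: "x' \<in> cdual \<Longrightarrow> (\<lambda>f. x' ((R ^^ k) f)) \<in> cdual"
proof (induction k arbitrary: x')
  case (Suc k)
  have "(\<lambda>f. x' (R f)) \<in> cdual"
    using regular unfolding resolvent_set_def
    by (intro cdual_compose[OF Suc.prems]) (simp_all add: resolvent_add resolvent_cscale)
  from Suc.IH[OF this] show ?case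
    by (simp add: funpow_swap1)
qed simp

lemma resolvent_dual_pow_dom:
  assumes dense: "densely_defined D" and x': "x' \<in> cdual"
  shows "(\<lambda>f. x' ((R ^^ k) f)) \<in> pow_dom cdual (adj_dom D A) (adj D A) k"
  using x'
proof (induction k arbitrary: x')
  case (Suc k)
  define y' where "y' g = complex_of_real \<mu> * x' (R g) + (- 1) * x' g" for g
  have y': "y' \<in> cdual"
    unfolding y'_def using cdual_compose_resolvent_funpow[OF Suc.prems, of 1] Suc.prems
    by (intro cdual_lincomb) simp_all
  have "x' ((R ^^ Suc k) (A f)) = y' ((R ^^ k) f)" if "f \<in> D" for f
  proof -
    have "(R ^^ Suc k) (A f) = (R ^^ k) (\<mu> *\<^sub>R R f - f)"
      by (simp only: funpow_Suc_right o_apply resolvent_op[OF that])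
    also have "\<dots> = \<mu> *\<^sub>R R ((R ^^ k) f) - (R ^^ k) f"
      by (simp add: resolvent_funpow_diff resolvent_funpow_scaleR funpow_swap1)
    finally show ?thesis
      using Suc.prems by (simp add: y'_def cdual_diff cdual_scaleR)
  qed
  moreover have "(\<lambda>f. x' ((R ^^ Suc k) f)) \<in> cdual" "(\<lambda>f. y' ((R ^^ k) f)) \<in> cdual"
    using cdual_compose_resolvent_funpow Suc.prems y' by blast+
  ultimately have "(\<lambda>f. x' ((R ^^ Suc k) f)) \<in> adj_dom D A"
    and "adj D A (\<lambda>f. x' ((R ^^ Suc k) f)) = (\<lambda>f. y' ((R ^^ k) f))"
    by (auto simp: adj_dom_def intro!: adj_eqI[OF dense])
  with Suc.IH[OF y'] show ?case by simp
qed simp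

lemma real_resolvent_eigenvector:
  assumes "(v, 0) \<in> D" "A (v, 0) = lam *\<^sub>R (v, 0)" "v \<noteq> 0"
  shows "\<mu> \<noteq> lam" "r v = (1 / (\<mu> - lam)) *\<^sub>R v"
proof -
  have "R ((\<mu> - lam) *\<^sub>R (v, 0)) = (v, 0)"
    using assms by (intro resolvent_eqI) (simp_all add: algebra_simps)
  then have eq: "(\<mu> - lam) *\<^sub>R r v = v"
    by (simp add: resolvent_scaleR resolvent_real linear_scale[OF linear_real_resolvent])
  with assms(3) show "\<mu> \<noteq> lam" by auto
  then have "(1 / (\<mu> - lam)) *\<^sub>R (\<mu> - lam) *\<^sub>R r v = r v" by simp
  with eq show "r v = (1 / (\<mu> - lam)) *\<^sub>R v" by simp
qed

lemma real_resolvent_dual_eigenvector: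
  assumes \<psi>: "\<psi> \<in> cdual" "dual_real \<psi>" "\<And>f. f \<in> D \<Longrightarrow> \<psi> (A f) = complex_of_real lam * \<psi> f"
    and "\<mu> \<noteq> lam"
  shows "real_functional \<psi> (r x) = (1 / (\<mu> - lam)) * real_functional \<psi> x"
proof -
  have "\<psi> (x, 0) = \<psi> (\<mu> *\<^sub>R R (x, 0) - A (R (x, 0)))" by (simp add: resolvent_eq)
  also have "\<dots> = (\<mu> - lam) * \<psi> (R (x, 0))"
    using \<psi> resolvent_mem by (simp add: cdual_diff cdual_scaleR algebra_simps)
  finally have "complex_of_real (real_functional \<psi> x)
      = complex_of_real ((\<mu> - lam) * real_functional \<psi> (r x))"
    unfolding resolvent_real dual_real_eq[OF \<psi>(2)] by simp
  then have "real_functional \<psi> x = (\<mu> - lam) * real_functional \<psi> (r x)"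
    by (simp only: of_real_eq_iff)
  with \<open>\<mu> \<noteq> lam\<close> show ?thesis by (simp add: field_simps)
qed

end

lemma (in real_operator) real_resolvent_identity:
  assumes "complex_of_real \<mu>0 \<in> resolvent_set D A" "complex_of_real \<mu> \<in> resolvent_set D A"
  shows "real_resolvent D A \<mu> x
           = real_resolvent D A \<mu>0 x + (\<mu>0 - \<mu>) *\<^sub>R real_resolvent D A \<mu>0 (real_resolvent D A \<mu> x)"
proof -
  interpret R0: real_regular_point D A \<mu>0 using assms(1) by unfold_locales
  interpret Rm: real_regular_point D A \<mu> using assms(2) by unfold_locales
  have "R0.R ((x, 0) + (\<mu>0 - \<mu>) *\<^sub>R Rm.R (x, 0)) = Rm.R (x, 0)"
    using Rm.resolvent_mem Rm.resolvent_eq[of "(x, 0)"]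
    by (intro R0.resolvent_eqI) (auto simp: algebra_simps)
  then show ?thesis
    by (simp add: R0.resolvent_add R0.resolvent_scaleR R0.resolvent_real Rm.resolvent_real
        linear_add[OF R0.linear_real_resolvent] linear_scale[OF R0.linear_real_resolvent])
qed

lemma (in real_operator) real_resolvent_commute:
  assumes "complex_of_real \<mu>0 \<in> resolvent_set D A" "complex_of_real \<mu> \<in> resolvent_set D A"
  shows "real_resolvent D A \<mu>0 (real_resolvent D A \<mu> x)
    = real_resolvent D A \<mu> (real_resolvent D A \<mu>0 x)"
proof (cases "\<mu> = \<mu>0")
  case False
  have cancel: "c = d" if "b = a + (\<mu>0 - \<mu>) *\<^sub>R c" "a = b + (\<mu> - \<mu>0) *\<^sub>R d" for a b c d :: 'a
  proof -
    have "(\<mu>0 - \<mu>) *\<^sub>R c = (\<mu>0 - \<mu>) *\<^sub>R d"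
      using that by (simp add: algebra_simps)
    with False show ?thesis by simp
  qed
  show ?thesis
    by (rule cancel[OF real_resolvent_identity[OF assms] real_resolvent_identity[OF assms(2,1)]])
qed simp

section \<open>Resolvents dominated by a rank-one operator\<close>

text \<open>The hypotheses of the theorem except for closedness of \<open>A\<close> and strict positivity of
  \<open>\<phi>\<close>, which the proof does not need; nor does it use that \<open>lam0\<close> is geometrically simple.\<close>
locale dominated_real_operator = real_operator D A
  for D :: "('a::{banach,ordered_real_vector,lattice} \<times> 'a) set" and A +
  fixes u :: 'a and \<phi> :: "'a \<times> 'a \<Rightarrow> complex" and m1 m2 :: nat and lam0 :: real
  assumes banach_lattice: "banach_lattice TYPE('a)"
    and dense: "densely_defined D"
    and u_nonneg: "0 \<le> u"
    and \<phi>_dual: "\<phi> \<in> cdual" and \<phi>_pos: "dual_pos \<phi>"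
    and dom1: "pow_dom UNIV D A m1 \<subseteq> ideal_gen u"
    and dom2: "pow_dom cdual (adj_dom D A) (adj D A) m2 \<subseteq> dual_ideal_gen \<phi>"
    and eig: "\<exists>v. v \<noteq> 0 \<and> vec_succeq v u \<and>
               eigenspace_op D A cscale (complex_of_real lam0) = range (\<lambda>c. cscale c (v, 0))"
    and eig': "\<exists>\<psi>. \<psi> \<noteq> (\<lambda>_. 0) \<and>
               \<psi> \<in> eigenspace_op (adj_dom D A) (adj D A) (\<lambda>c g f. c * g f) (complex_of_real lam0)
               \<and> dual_real \<psi> \<and> dual_succeq \<psi> \<phi>"
begin

abbreviation "ph \<equiv> real_functional \<phi>"

lemma ph_nonneg: "0 \<le> x \<Longrightarrow> 0 \<le> ph x"
  using \<phi>_pos unfolding dual_pos_def real_functional_def by blast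

lemma ph_labs: "0 \<le> x \<Longrightarrow> Re (\<phi> (labs x, 0)) = ph x"
  by (simp add: labs_of_nonneg real_functional_def)

lemma resolvent_funpow_order_bounded:
  fixes T :: "'a \<Rightarrow> 'a"
  assumes "complex_of_real \<mu> \<in> resolvent_set D A" "linear T" "continuous_on UNIV T"
  obtains K where "0 \<le> K" "\<And>y. labs ((real_resolvent D A \<mu> ^^ m1) (T y)) \<le> (K * norm y) *\<^sub>R u"
proof -
  interpret real_regular_point D A \<mu> using assms(1) by unfold_locales
  have ideal: "\<exists>c. labs ((r ^^ m1) (T y)) \<le> c *\<^sub>R u" for y
  proof -
    have "(R ^^ m1) (T y, 0) \<in> ideal_gen u"
      using dom1 resolvent_funpow_pow_dom by blast
    then show ?thesis
      unfolding resolvent_funpow_real ideal_gen_def by blast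
  qed
  have "linear (\<lambda>y. (r ^^ m1) (T y))"
    using linear_compose[OF assms(2) linear_funpow[OF linear_real_resolvent]] by (simp add: o_def)
  moreover have "continuous_on UNIV (\<lambda>y. (r ^^ m1) (T y))"
    by (rule continuous_on_compose2[OF continuous_on_funpow[OF continuous_real_resolvent] assms(3)])
      simp
  ultimately obtain K where "0 \<le> K" "\<And>y. labs ((r ^^ m1) (T y)) \<le> (K * norm y) *\<^sub>R u"
    using order_bounded_of_ideal_valued[where F = "\<lambda>y. (r ^^ m1) (T y)",
        OF banach_lattice _ _ u_nonneg]
      ideal by blast
  then show ?thesis by (rule that)
qed

lemma resolvent_funpow_norm_dominated:
  assumes "complex_of_real \<mu> \<in> resolvent_set D A"
  obtains K where "0 \<le> K" "\<And>x. 0 \<le> x \<Longrightarrow> norm ((real_resolvent D A \<mu> ^^ m2) x) \<le> K * ph x"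
proof -
  interpret real_regular_point D A \<mu> using assms by unfold_locales
  have "\<exists>c. \<forall>x\<in>{x. 0 \<le> x}. \<bar>blinfun_apply l ((r ^^ m2) x)\<bar> \<le> c * ph x" for l :: "'a \<Rightarrow>\<^sub>L real"
  proof -
    define l' where "l' z = complex_of_real (l (fst z)) + \<i> * complex_of_real (l (snd z))" for z
    have "(\<lambda>f. l' ((R ^^ m2) f)) \<in> dual_ideal_gen \<phi>"
      using dom2 resolvent_dual_pow_dom[OF dense complexified_functional_cdual[of l]]
      unfolding l'_def by blast
    then obtain c where c: "\<And>x. cmod (l' ((R ^^ m2) (x, 0))) \<le> c * Re (\<phi> (labs x, 0))"
      unfolding dual_ideal_gen_def by blast
    have "\<bar>blinfun_apply l ((r ^^ m2) x)\<bar> \<le> c * ph x" if "0 \<le> x" for x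
      using c[of x] by (simp add: l'_def resolvent_funpow_real ph_labs[OF that])
    then show ?thesis by blast
  qed
  then show ?thesis
    using norm_bounded_of_weakly_bounded[of "{x. 0 \<le> x}" ph] ph_nonneg that by auto
qed

lemma resolvent_remainder_bound:
  assumes "complex_of_real \<mu>0 \<in> resolvent_set D A" "complex_of_real \<mu> \<in> resolvent_set D A"
  obtains K where "\<And>x. 0 \<le> x \<Longrightarrow>
    labs ((real_resolvent D A \<mu>0 ^^ (m1 + m2)) (real_resolvent D A \<mu> x)) \<le> (K * ph x) *\<^sub>R u"
proof -
  interpret R0: real_regular_point D A \<mu>0 using assms(1) by unfold_locales
  interpret Rm: real_regular_point D A \<mu> using assms(2) by unfold_locales
  obtain K1 where K1: "0 \<le> K1" "\<And>y. labs ((R0.r ^^ m1) (Rm.r y)) \<le> (K1 * norm y) *\<^sub>R u"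
    using resolvent_funpow_order_bounded[OF assms(1) Rm.linear_real_resolvent
        Rm.continuous_real_resolvent]
    by blast
  obtain K2 where K2: "\<And>x. 0 \<le> x \<Longrightarrow> norm ((R0.r ^^ m2) x) \<le> K2 * ph x"
    using resolvent_funpow_norm_dominated[OF assms(1)] by blast
  have commute: "(R0.r ^^ k) (Rm.r x) = Rm.r ((R0.r ^^ k) x)" for k x
    by (induction k) (simp_all add: real_resolvent_commute[OF assms])
  have "labs ((R0.r ^^ (m1 + m2)) (Rm.r x)) \<le> ((K1 * K2) * ph x) *\<^sub>R u" if "0 \<le> x" for x
  proof -
    have "(R0.r ^^ (m1 + m2)) (Rm.r x) = (R0.r ^^ m1) (Rm.r ((R0.r ^^ m2) x))"
      by (simp add: funpow_add commute)
    also have "labs \<dots> \<le> (K1 * norm ((R0.r ^^ m2) x)) *\<^sub>R u" by (rule K1(2))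
    also have "\<dots> \<le> ((K1 * K2) * ph x) *\<^sub>R u"
      using K1(1) K2[OF that] u_nonneg by (simp add: mult_left_mono scaleR_right_mono mult.assoc)
    finally show ?thesis .
  qed
  then show ?thesis by (rule that)
qed

lemma eigenvector_data:
  obtains v where "vec_succeq v u" "\<exists>M\<ge>0. v \<le> M *\<^sub>R u"
    and "\<And>\<mu>. complex_of_real \<mu> \<in> resolvent_set D A \<Longrightarrow>
      \<mu> \<noteq> lam0 \<and> real_resolvent D A \<mu> v = (1 / (\<mu> - lam0)) *\<^sub>R v"
proof -
  obtain v where v: "v \<noteq> 0" "vec_succeq v u"
    and eigenspace: "eigenspace_op D A cscale (complex_of_real lam0) = range (\<lambda>c. cscale c (v, 0))"
    using eig by blast
  have "(v, 0) = cscale 1 (v, 0)" by (simp add: cscale_def)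
  then have "(v, 0) \<in> eigenspace_op D A cscale (complex_of_real lam0)"
    unfolding eigenspace by blast
  then have vD: "(v, 0) \<in> D" and Av: "A (v, 0) = lam0 *\<^sub>R (v, 0)"
    unfolding eigenspace_op_def by auto
  then have "(v, 0) \<in> ideal_gen u"
    using dom1 eigenvector_pow_dom by blast
  then have "\<exists>M\<ge>0. v \<le> M *\<^sub>R u"
    unfolding ideal_gen_def labs_le_iff by auto
  moreover have "\<mu> \<noteq> lam0 \<and> real_resolvent D A \<mu> v = (1 / (\<mu> - lam0)) *\<^sub>R v"
    if "complex_of_real \<mu> \<in> resolvent_set D A" for \<mu>
  proof -
    interpret real_regular_point D A \<mu> using that by unfold_locales
    show ?thesis using real_resolvent_eigenvector[OF vD Av v(1)] by blast
  qed
  ultimately show ?thesis using that v(2) by blast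
qed

lemma dual_eigenvector_data:
  obtains \<psi> where "linear (real_functional \<psi>)"
    and "\<exists>\<epsilon>>0. \<forall>x\<ge>0. \<epsilon> * ph x \<le> real_functional \<psi> x"
    and "\<exists>M\<ge>0. \<forall>x\<ge>0. real_functional \<psi> x \<le> M * ph x"
    and "\<And>\<mu> x. complex_of_real \<mu> \<in> resolvent_set D A \<Longrightarrow> \<mu> \<noteq> lam0 \<Longrightarrow>
      real_functional \<psi> (real_resolvent D A \<mu> x) = (1 / (\<mu> - lam0)) * real_functional \<psi> x"
proof -
  obtain \<psi> where \<psi>: "\<psi> \<in> adj_dom D A" "adj D A \<psi> = (\<lambda>f. complex_of_real lam0 * \<psi> f)"
    and real: "dual_real \<psi>" and succeq: "dual_succeq \<psi> \<phi>"
    using eig' unfolding eigenspace_op_def by auto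
  have \<psi>_dual: "\<psi> \<in> cdual" using \<psi>(1) unfolding adj_dom_def by blast
  have \<psi>_adj: "\<psi> (A f) = complex_of_real lam0 * \<psi> f" if "f \<in> D" for f
  proof -
    obtain y' where "y' \<in> cdual" "\<forall>f\<in>D. \<psi> (A f) = y' f"
      using \<psi>(1) unfolding adj_dom_def by blast
    with \<psi>(2) adj_eqI[OF dense \<psi>_dual] that show ?thesis by metis
  qed
  obtain \<epsilon> where "\<epsilon> > 0" "dual_pos (\<lambda>f. \<psi> f - complex_of_real \<epsilon> * \<phi> f)"
    using succeq unfolding dual_succeq_def by blast
  then have "\<exists>\<epsilon>>0. \<forall>x\<ge>0. \<epsilon> * ph x \<le> real_functional \<psi> x"
    unfolding dual_pos_def real_functional_def by auto
  moreover have "\<psi> \<in> dual_ideal_gen \<phi>"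
    using dom2 adj_eigenvector_pow_dom[OF dense \<psi>] by blast
  then obtain M where "0 \<le> M" "\<And>x. cmod (\<psi> (x, 0)) \<le> M * Re (\<phi> (labs x, 0))"
    unfolding dual_ideal_gen_def by blast
  then have "\<exists>M\<ge>0. \<forall>x\<ge>0. real_functional \<psi> x \<le> M * ph x"
    using dual_real_eq[OF real] by (metis norm_of_real abs_ge_self order_trans ph_labs)
  moreover have "real_functional \<psi> (real_resolvent D A \<mu> x)
      = (1 / (\<mu> - lam0)) * real_functional \<psi> x"
    if "complex_of_real \<mu> \<in> resolvent_set D A" "\<mu> \<noteq> lam0" for \<mu> x
  proof -
    interpret real_regular_point D A \<mu> using that(1) by unfold_locales
    show ?thesis by (rule real_resolvent_dual_eigenvector[OF \<psi>_dual real \<psi>_adj that(2)])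
  qed
  ultimately show ?thesis
    using that linear_real_functional[OF \<psi>_dual] by blast
qed

lemma eigen_frame_data:
  obtains v ps where "eigen_frame u v ph ps"
    and "\<And>\<mu>. complex_of_real \<mu> \<in> resolvent_set D A \<Longrightarrow>
      real_resolvent D A \<mu> v = (1 / (\<mu> - lam0)) *\<^sub>R v \<and>
      (\<forall>x. ps (real_resolvent D A \<mu> x) = (1 / (\<mu> - lam0)) * ps x)"
proof -
  obtain v where v: "vec_succeq v u" "\<exists>M\<ge>0. v \<le> M *\<^sub>R u"
    and v_eigen: "\<And>\<mu>. complex_of_real \<mu> \<in> resolvent_set D A \<Longrightarrow>
      \<mu> \<noteq> lam0 \<and> real_resolvent D A \<mu> v = (1 / (\<mu> - lam0)) *\<^sub>R v"
    using eigenvector_data by blast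
  obtain \<psi> where \<psi>: "linear (real_functional \<psi>)"
    "\<exists>\<epsilon>>0. \<forall>x\<ge>0. \<epsilon> * ph x \<le> real_functional \<psi> x"
    "\<exists>M\<ge>0. \<forall>x\<ge>0. real_functional \<psi> x \<le> M * ph x"
    and \<psi>_eigen: "\<And>\<mu> x. complex_of_real \<mu> \<in> resolvent_set D A \<Longrightarrow> \<mu> \<noteq> lam0 \<Longrightarrow>
      real_functional \<psi> (real_resolvent D A \<mu> x) = (1 / (\<mu> - lam0)) * real_functional \<psi> x"
    using dual_eigenvector_data by blast
  have "eigen_frame u v ph (real_functional \<psi>)"
    by (intro eigen_frame.intro u_nonneg linear_real_functional[OF \<phi>_dual] ph_nonneg v \<psi>)
  with v_eigen \<psi>_eigen show ?thesis
    using that[of v "real_functional \<psi>"] by blast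
qed

text \<open>For \<open>\<sigma> = -1\<close> this is part (b): replacing each real resolvent \<open>r\<close> by \<open>-r\<close> turns the
  resolvent identity into the same fixpoint equation with \<open>t = \<mu> - \<mu>0\<close>.\<close>
lemma resolvent_powers_tensor_bounded_below:
  assumes \<mu>0: "complex_of_real \<mu>0 \<in> resolvent_set D A"
    and \<mu>: "complex_of_real \<mu> \<in> resolvent_set D A"
    and \<sigma>: "\<sigma> \<in> {1, - 1}" and t: "0 \<le> \<sigma> * (\<mu>0 - \<mu>)"
    and bounded: "tensor_bounded_below u ph (\<lambda>x. \<sigma> *\<^sub>R real_resolvent D A \<mu>0 x)"
  shows "tensor_bounded_below u ph (\<lambda>x. (\<sigma> ^ n) *\<^sub>R (real_resolvent D A \<mu> ^^ n) x)"
proof -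
  interpret R0: real_regular_point D A \<mu>0 using \<mu>0 by unfold_locales
  interpret Rm: real_regular_point D A \<mu> using \<mu> by unfold_locales
  obtain v ps where "eigen_frame u v ph ps"
    and eigen: "\<And>\<mu>. complex_of_real \<mu> \<in> resolvent_set D A \<Longrightarrow>
      real_resolvent D A \<mu> v = (1 / (\<mu> - lam0)) *\<^sub>R v \<and>
      (\<forall>x. ps (real_resolvent D A \<mu> x) = (1 / (\<mu> - lam0)) * ps x)"
    using eigen_frame_data by blast
  then interpret eigen_frame u v ph ps by simp
  define s where "s = (\<lambda>x. \<sigma> *\<^sub>R R0.r x)"
  define w where "w = (\<lambda>x. \<sigma> *\<^sub>R Rm.r x)"
  have \<sigma>2: "\<sigma> * \<sigma> = 1" using \<sigma> by auto
  have "linear s" "linear w"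
    unfolding s_def w_def
    by (simp_all add: linear_compose_scale_right R0.linear_real_resolvent Rm.linear_real_resolvent)
  moreover have "w x = s x + (\<sigma> * (\<mu>0 - \<mu>)) *\<^sub>R s (w x)" for x
  proof -
    have sw: "s (w x) = R0.r (Rm.r x)"
      using \<sigma>2 by (simp add: s_def w_def linear_scale[OF R0.linear_real_resolvent])
    have "w x = \<sigma> *\<^sub>R (R0.r x + (\<mu>0 - \<mu>) *\<^sub>R R0.r (Rm.r x))"
      unfolding w_def using real_resolvent_identity[OF \<mu>0 \<mu>, of x]
      by (rule arg_cong[where f = "scaleR \<sigma>"])
    then show ?thesis
      unfolding sw by (simp add: s_def scaleR_add_right)
  qed
  moreover obtain K where "\<And>x. 0 \<le> x \<Longrightarrow> labs ((R0.r ^^ (m1 + m2)) (Rm.r x)) \<le> (K * ph x) *\<^sub>R u"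
    using resolvent_remainder_bound[OF \<mu>0 \<mu>] by blast
  then have "tensor_bounded_below u ph (\<lambda>x. (s ^^ (m1 + m2)) (w x))"
    using \<sigma> u_nonneg unfolding s_def w_def
    by (intro tensor_bounded_below_of_labs_le[where K = K])
      (auto simp: funpow_scaleR_linear[OF R0.linear_real_resolvent]
        linear_scale[OF linear_funpow[OF R0.linear_real_resolvent]] power_minus')
  ultimately have "tensor_bounded_below u ph (w ^^ n)"
    using eigen[OF \<mu>0] eigen[OF \<mu>] t bounded
    by (intro tensor_bounded_below_transfer[where s = s and w = w])
      (auto simp: s_def w_def linear_scale[OF ps_linear])
  moreover have "w ^^ n = (\<lambda>x. (\<sigma> ^ n) *\<^sub>R (Rm.r ^^ n) x)"
    unfolding w_def by (rule ext) (rule funpow_scaleR_linear[OF Rm.linear_real_resolvent])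
  ultimately show ?thesis by simp
qed

lemma resolvent_powers_succeq_neg_tensor:
  assumes \<mu>0: "complex_of_real \<mu>0 \<in> resolvent_set D A"
    and \<mu>: "complex_of_real \<mu> \<in> resolvent_set D A"
    and "op_succeq (resolvent D A (complex_of_real \<mu>0)) (\<lambda>f. - tensor u \<phi> f)" and "\<mu> \<le> \<mu>0"
  shows "op_succeq (resolvent D A (complex_of_real \<mu>) ^^ n) (\<lambda>f. - tensor u \<phi> f)"
proof -
  interpret R0: real_regular_point D A \<mu>0 using \<mu>0 by unfold_locales
  interpret Rm: real_regular_point D A \<mu> using \<mu> by unfold_locales
  note iff = op_succeq_neg_tensor_iff[OF \<phi>_pos u_nonneg]
  have "tensor_bounded_below u ph (\<lambda>x. 1 *\<^sub>R R0.r x)"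
    using assms(3) by (simp add: iff[where t = R0.r, OF R0.resolvent_real])
  then have "tensor_bounded_below u ph (Rm.r ^^ n)"
    using resolvent_powers_tensor_bounded_below[OF \<mu>0 \<mu>, of 1] assms(4) by simp
  then show ?thesis
    by (simp add: iff[where t = "Rm.r ^^ n", OF Rm.resolvent_funpow_real])
qed

lemma tensor_succeq_signed_resolvent_powers:
  assumes \<mu>0: "complex_of_real \<mu>0 \<in> resolvent_set D A"
    and \<mu>: "complex_of_real \<mu> \<in> resolvent_set D A"
    and "op_succeq (tensor u \<phi>) (resolvent D A (complex_of_real \<mu>0))" and "\<mu>0 \<le> \<mu>" and "1 \<le> n"
  shows "op_succeq (tensor u \<phi>)
    (\<lambda>f. (- 1) ^ (n - 1) *\<^sub>R (resolvent D A (complex_of_real \<mu>) ^^ n) f)"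
proof -
  interpret R0: real_regular_point D A \<mu>0 using \<mu>0 by unfold_locales
  interpret Rm: real_regular_point D A \<mu> using \<mu> by unfold_locales
  note iff = op_succeq_tensor_iff[OF \<phi>_pos u_nonneg]
  have "tensor_bounded_below u ph (\<lambda>x. (- 1) *\<^sub>R R0.r x)"
    using assms(3) by (simp add: iff[where t = R0.r, OF R0.resolvent_real])
  then have "tensor_bounded_below u ph (\<lambda>x. (- 1) ^ n *\<^sub>R (Rm.r ^^ n) x)"
    using resolvent_powers_tensor_bounded_below[OF \<mu>0 \<mu>, of "- 1"] assms(4) by simp
  moreover obtain k where "n = Suc k" using Suc_le_D[of 0 n] assms(5) by auto
  then have "(\<lambda>x. - ((- 1) ^ (n - 1) *\<^sub>R (Rm.r ^^ n) x)) = (\<lambda>x. (- 1) ^ n *\<^sub>R (Rm.r ^^ n) x)"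
    by simp
  moreover have "(\<lambda>f. (- 1) ^ (n - 1) *\<^sub>R (Rm.R ^^ n) f) (x, 0)
      = ((- 1) ^ (n - 1) *\<^sub>R (Rm.r ^^ n) x, 0)"
    for x by (simp add: Rm.resolvent_funpow_real)
  note iff[where t = "\<lambda>x. (- 1) ^ (n - 1) *\<^sub>R (Rm.r ^^ n) x", OF this]
  ultimately show ?thesis by simp
qed

end

theorem theorem4p5:
  fixes D :: "('a::{banach,ordered_real_vector,lattice} \<times> 'a) set"
    and A :: "'a \<times> 'a \<Rightarrow> 'a \<times> 'a"
    and u :: 'a
    and \<phi> :: "'a \<times> 'a \<Rightarrow> complex"
    and m1 m2 :: nat
    and lam0 \<mu>0 \<mu> :: real
  assumes BL: "banach_lattice TYPE('a)"
    and lin: "linear_op D A"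
    and dense: "densely_defined D"
    and closed: "closed_op D A"
    and real: "real_op D A"
    and u_pos: "0 \<le> u"
    and \<phi>_dual: "\<phi> \<in> cdual"
    and \<phi>_pos: "dual_pos \<phi>"
    and \<phi>_strict: "strictly_positive \<phi>"
    and dom1: "pow_dom UNIV D A m1 \<subseteq> ideal_gen u"
    and dom2: "pow_dom cdual (adj_dom D A) (adj D A) m2 \<subseteq> dual_ideal_gen \<phi>"
    and eig: "\<exists>v. v \<noteq> 0 \<and> vec_succeq v u \<and>
               eigenspace_op D A cscale (complex_of_real lam0) = range (\<lambda>c. cscale c (v, 0))"
    and eig': "\<exists>\<psi>. \<psi> \<noteq> (\<lambda>_. 0) \<and>
               \<psi> \<in> eigenspace_op (adj_dom D A) (adj D A) (\<lambda>c g f. c * g f) (complex_of_real lam0)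
               \<and> dual_real \<psi> \<and> dual_succeq \<psi> \<phi>"
    and \<mu>0_res: "complex_of_real \<mu>0 \<in> resolvent_set D A"
    and \<mu>_res: "complex_of_real \<mu> \<in> resolvent_set D A"
  shows "(op_succeq (resolvent D A (complex_of_real \<mu>0)) (\<lambda>f. - tensor u \<phi> f) \<and> \<mu> \<le> \<mu>0 \<longrightarrow>
            op_succeq (resolvent D A (complex_of_real \<mu>)) (\<lambda>f. - tensor u \<phi> f) \<and>
            (\<forall>n\<ge>1. op_succeq (resolvent D A (complex_of_real \<mu>) ^^ n) (\<lambda>f. - tensor u \<phi> f)))
       \<and> (op_succeq (tensor u \<phi>) (resolvent D A (complex_of_real \<mu>0)) \<and> \<mu> \<ge> \<mu>0 \<longrightarrow>
            op_succeq (tensor u \<phi>) (resolvent D A (complex_of_real \<mu>)) \<and>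
            (\<forall>n\<ge>1. op_succeq (tensor u \<phi>)
                      (\<lambda>f. ((-1::real) ^ (n - 1)) *\<^sub>R (resolvent D A (complex_of_real \<mu>) ^^ n) f)))"
proof -
  interpret dominated_real_operator D A u \<phi> m1 m2 lam0
    using lin real BL dense u_pos \<phi>_dual \<phi>_pos dom1 dom2 eig eig' by unfold_locales
  show ?thesis
  proof (intro conjI impI allI)
    assume "op_succeq (resolvent D A (complex_of_real \<mu>0)) (\<lambda>f. - tensor u \<phi> f) \<and> \<mu> \<le> \<mu>0"
    then have powers:
        "op_succeq (resolvent D A (complex_of_real \<mu>) ^^ n) (\<lambda>f. - tensor u \<phi> f)" for n
      using resolvent_powers_succeq_neg_tensor[OF \<mu>0_res \<mu>_res] by blast
    show "op_succeq (resolvent D A (complex_of_real \<mu>)) (\<lambda>f. - tensor u \<phi> f)"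
      using powers[of 1] by simp
    show "op_succeq (resolvent D A (complex_of_real \<mu>) ^^ n) (\<lambda>f. - tensor u \<phi> f)" for n
      by (rule powers)
  next
    assume "op_succeq (tensor u \<phi>) (resolvent D A (complex_of_real \<mu>0)) \<and> \<mu>0 \<le> \<mu>"
    then have powers: "op_succeq (tensor u \<phi>)
        (\<lambda>f. (- 1) ^ (n - 1) *\<^sub>R (resolvent D A (complex_of_real \<mu>) ^^ n) f)" if "1 \<le> n" for n
      using tensor_succeq_signed_resolvent_powers[OF \<mu>0_res \<mu>_res] that by blast
    show "op_succeq (tensor u \<phi>) (resolvent D A (complex_of_real \<mu>))"
      using powers[of 1] by simp
    show "1 \<le> n \<Longrightarrow> op_succeq (tensor u \<phi>)
        (\<lambda>f. (- 1) ^ (n - 1) *\<^sub>R (resolvent D A (complex_of_real \<mu>) ^^ n) f)" for n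
      by (rule powers)
  qed
qed

end
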